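(* With $\Gamma^+(\overline{\mathcal O})=N^+(\overline{\mathcal O})/\mathbb Q^\times$, $\Gamma^1(\overline{\mathcal O})=\overline{\mathcal O}^1/\{\pm1\}$ and $\Gamma^1(\overline{\mathcal O})[2]=\{\gamma\in\overline{\mathcal O}^1:\gamma\equiv1\bmod 2\overline{\mathcal O}\}/\{\pm1\}$, we have (i) $\Gamma^+(\overline{\mathcal O})/\Gamma^1(\overline{\mathcal O})[2]\cong D_8\times C_2\times C_2$; (ii) $\Gamma^+(\overline{\mathcal O})/\Gamma^1(\overline{\mathcal O})\cong C_2\times C_2\times C_2$; (iii) $\Gamma^1(\overline{\mathcal O})/\Gamma^1(\overline{\mathcal O})[2]\cong C_2\times C_2$.
   Context: $B$ is the $\mathbb Q$-algebra with basis $1,e_1,e_2,e_3$ and multiplication $e_1^2=48,\ e_2^2=48,\ e_3^2=-240,\ e_1e_2=12-3e_3,\ e_2e_1=12+3e_3,\ e_2e_3=16e_1-4e_2,\ e_3e_2=-16e_1+4e_2,\ e_3e_1=-4e_1+16e_2,\ e_1e_3=4e_1-16e_2$ (an indefinite quaternion algebra over $\mathbb Q$ of discriminant 15). $\overline{\mathcal O}=\mathbb Z\oplus\mathbb Zw_1\oplus\mathbb Zw_2\oplus\mathbb Zw_3$, $w_1=(e_1-e_2)/6$, $w_2=e_2/2$, $w_3=\frac12(1+e_3/4)$, an Eichler order of reduced discriminant 30 and level 2. $\overline{\mathcal O}^1$ is the group of elements of reduced norm 1; $N^+(\overline{\mathcal O})$ is the set of $x\in B^\times$ of positive reduced norm with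 $x\overline{\mathcal O}x^{-1}=\overline{\mathcal O}$. $D_8$ is the dihedral group of order 8, $C_2$ the cyclic group of order 2. *)

theory Defs
  imports "HOL-Algebra.Algebra"
begin

section \<open>The quaternion algebra B of discriminant 15\<close>

text \<open>Elements of B are written a0 + a1 e1 + a2 e2 + a3 e3 with rational coordinates;
  we represent them by the coordinate function on the index set {0,1,2,3}
  (index 0 = the unit 1, index i = e_i).\<close>

datatype quat = Quat rat rat rat rat

fun qc :: "quat \<Rightarrow> nat \<Rightarrow> rat" where
  "qc (Quat a0 a1 a2 a3) i =
     (if i = 0 then a0 else if i = 1 then a1 else if i = 2 then a2 else if i = 3 then a3 else 0)"

definition qadd :: "quat \<Rightarrow> quat \<Rightarrow> quat" where
  "qadd x y = Quat (qc x 0 + qc y 0) (qc x 1 + qc y 1) (qc x 2 + qc y 2) (qc x 3 + qc y 3)"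

definition qscale :: "rat \<Rightarrow> quat \<Rightarrow> quat" where
  "qscale r x = Quat (r * qc x 0) (r * qc x 1) (r * qc x 2) (r * qc x 3)"

definition qsub :: "quat \<Rightarrow> quat \<Rightarrow> quat" where
  "qsub x y = qadd x (qscale (-1) y)"

definition qzero :: quat where "qzero = Quat 0 0 0 0"

definition qof :: "rat \<Rightarrow> quat" where "qof r = Quat r 0 0 0"
definition qone :: quat where "qone = qof 1"
definition e1 :: quat where "e1 = Quat 0 1 0 0"
definition e2 :: quat where "e2 = Quat 0 0 1 0"
definition e3 :: quat where "e3 = Quat 0 0 0 1"

fun ebasis_mul :: "nat \<Rightarrow> nat \<Rightarrow> quat" where
  "ebasis_mul i j =
    (if i = 0 then (if j = 0 then qone else if j = 1 then e1 else if j = 2 then e2 else e3)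
     else if j = 0 then (if i = 1 then e1 else if i = 2 then e2 else e3)
     else if i = 1 \<and> j = 1 then qof 48
     else if i = 2 \<and> j = 2 then qof 48
     else if i = 3 \<and> j = 3 then qof (-240)
     else if i = 1 \<and> j = 2 then Quat 12 0 0 (-3)
     else if i = 2 \<and> j = 1 then Quat 12 0 0 3
     else if i = 2 \<and> j = 3 then Quat 0 16 (-4) 0
     else if i = 3 \<and> j = 2 then Quat 0 (-16) 4 0
     else if i = 3 \<and> j = 1 then Quat 0 (-4) 16 0
     else Quat 0 4 (-16) 0)"

definition qsum :: "(nat \<Rightarrow> quat) \<Rightarrow> nat list \<Rightarrow> quat" where
  "qsum f xs = foldr (\<lambda>i acc. qadd (f i) acc) xs qzero"

definition qmul :: "quat \<Rightarrow> quat \<Rightarrow> quat" where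
  "qmul x y = qsum (\<lambda>i. qsum (\<lambda>j. qscale (qc x i * qc y j) (ebasis_mul i j)) [0,1,2,3]) [0,1,2,3]"

text \<open>Since e1^2, e2^2, e3^2 are rational and the
  e_i are not, each e_i has reduced trace 0, so trd(x) = 2 a0 and the canonical
  involution is conj(x) = trd(x) - x = a0 - a1 e1 - a2 e2 - a3 e3;
  the reduced norm is nrd(x) = x * conj(x) (a rational scalar).\<close>
definition qconj :: "quat \<Rightarrow> quat" where
  "qconj x = Quat (qc x 0) (- qc x 1) (- qc x 2) (- qc x 3)"

definition nrd :: "quat \<Rightarrow> rat" where
  "nrd x = qc (qmul x (qconj x)) 0"

definition Bunits :: "quat set" where
  "Bunits = {x. \<exists>y. qmul x y = qone \<and> qmul y x = qone}"

definition qinv :: "quat \<Rightarrow> quat" where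
  "qinv x = (THE y. qmul x y = qone \<and> qmul y x = qone)"

section \<open>The Eichler order of level 2\<close>

definition w1 :: quat where "w1 = qscale (1/6) (qsub e1 e2)"
definition w2 :: quat where "w2 = qscale (1/2) e2"
definition w3 :: quat where "w3 = qscale (1/2) (qadd qone (qscale (1/4) e3))"

definition Ord :: "quat set" where
  "Ord = {qadd (qof (of_int n0)) (qadd (qscale (of_int n1) w1)
            (qadd (qscale (of_int n2) w2) (qscale (of_int n3) w3))) | n0 n1 n2 n3 :: int. True}"

definition Ord1 :: "quat set" where
  "Ord1 = {x \<in> Ord. nrd x = 1}"

definition Ord1_2 :: "quat set" where
  "Ord1_2 = {g \<in> Ord1. qsub g qone \<in> qscale 2 ` Ord}"

definition Nplus :: "quat set" where
  "Nplus = {x \<in> Bunits. nrd x > 0 \<and> (\<lambda>y. qmul (qmul x y) (qinv x)) ` Ord = Ord}"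

definition Qstar :: "quat set" where
  "Qstar = {qof r | r. r \<noteq> 0}"

definition Nplus_group :: "quat monoid" where
  "Nplus_group = \<lparr>carrier = Nplus, monoid.mult = qmul, one = qone\<rparr>"

definition Ord1_group :: "quat monoid" where
  "Ord1_group = \<lparr>carrier = Ord1, monoid.mult = qmul, one = qone\<rparr>"

definition GammaPlus :: "quat set monoid" where
  "GammaPlus = Nplus_group Mod Qstar"

definition Gamma1 :: "quat set monoid" where
  "Gamma1 = Ord1_group Mod {qone, qof (-1)}"

definition Gamma1_2 :: "quat set set" where
  "Gamma1_2 = (\<lambda>g. r_coset Ord1_group {qone, qof (-1)} g) ` Ord1_2"

text \<open>Images of Gamma^1(O) and Gamma^1(O)[2] in Gamma^+(O) under the (injective)
  map gamma {+-1} \<mapsto> gamma Q^x.\<close>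
definition Gamma1_in_plus :: "quat set set" where
  "Gamma1_in_plus = (\<lambda>g. r_coset Nplus_group Qstar g) ` Ord1"

definition Gamma1_2_in_plus :: "quat set set" where
  "Gamma1_2_in_plus = (\<lambda>g. r_coset Nplus_group Qstar g) ` Ord1_2"

definition C2 :: "int monoid" where "C2 = integer_mod_group 2"

text \<open>Dihedral group of order 8: pairs (a,s) standing for r^a s^s with r^4 = s^2 = 1,
  s r s = r^-1.\<close>
definition D8 :: "(int \<times> int) monoid" where
  "D8 = \<lparr>carrier = {0..<4} \<times> {0..<2},
         monoid.mult = (\<lambda>(a, s) (b, t). ((a + (if s = 0 then b else - b)) mod 4, (s + t) mod 2)),
         one = (0, 0)\<rparr>"

end

theory Submission
  imports Defs
begin

(*
  In the Z-basis 1, w1, w2, w3 of O the reduced norm is the integral form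
  a^2 + a d - 2 b^2 + 6 b c - 12 c^2 + 4 d^2.  If a primitive y in O normalises O, then nrd y divides
  every coordinate of y w_i conj(y), and five of these coordinates already force nrd y | 30.  Hence every
  element of N+(O) is a rational multiple of a primitive element of norm dividing 30, and the parities of
  the 2-, 3- and 5-adic valuations of nrd are homomorphisms N+(O) -> C2 whose common kernel is Q^x O^1;
  this gives (ii).

  Modulo 2, O is the Eichler order [[a, b], [2c, d]] reduced mod 2.  Conjugation by N+(O) acts on O/2O
  by automorphisms, each determined by the image of the idempotent E11 = w3 mod 2, which is one of eight
  idempotents; recording it gives a homomorphism onto D8 which also detects the 2-adic parity.
  Together with the 3- and 5-adic parities its kernel is Q^x O^1[2], giving (i).  On O^1 the
  residues are [[1, b], [2c, 1]] and (b, c) is a homomorphism onto C2 x C2 with kernel O^1[2], giving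
  (iii).  Surjectivity is checked on explicit elements of norm 1, 2, 3 and 15.
*)

lemma FactGroup_induced_hom:
  assumes G: "group G" and N: "Z \<lhd> G" and T: "group T" and hom: "\<Psi> \<in> hom G T"
    and trivial: "\<And>z. z \<in> Z \<Longrightarrow> \<Psi> z = \<one>\<^bsub>T\<^esub>"
  shows "(\<lambda>C. the_elem (\<Psi> ` C)) \<in> hom (G Mod Z) T"
    and "\<And>x. x \<in> carrier G \<Longrightarrow> the_elem (\<Psi> ` (Z #>\<^bsub>G\<^esub> x)) = \<Psi> x"
proof -
  interpret G: group G by (rule G)
  interpret T: group T by (rule T)
  interpret N: normal Z G by (rule N)
  have sub: "subgroup Z G" by (rule N.subgroup_axioms)
  have "\<Psi> ` (Z #>\<^bsub>G\<^esub> x) = {\<Psi> x}" if x: "x \<in> carrier G" for x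
  proof
    show "\<Psi> ` (Z #>\<^bsub>G\<^esub> x) \<subseteq> {\<Psi> x}"
      using x trivial hom G.subgroupE(1)[OF sub] by (auto simp: r_coset_def hom_mult hom_in_carrier)
    show "{\<Psi> x} \<subseteq> \<Psi> ` (Z #>\<^bsub>G\<^esub> x)" using G.rcos_self[OF x sub] by auto
  qed
  then show coset: "the_elem (\<Psi> ` (Z #>\<^bsub>G\<^esub> x)) = \<Psi> x" if "x \<in> carrier G" for x
    using that by simp
  show "(\<lambda>C. the_elem (\<Psi> ` C)) \<in> hom (G Mod Z) T"
  proof (rule homI)
    fix C assume "C \<in> carrier (G Mod Z)"
    then show "the_elem (\<Psi> ` C) \<in> carrier T"
      using coset hom by (auto simp: FactGroup_def RCOSETS_def hom_in_carrier)
  next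
    fix C D assume "C \<in> carrier (G Mod Z)" "D \<in> carrier (G Mod Z)"
    then obtain x y where "x \<in> carrier G" "C = Z #>\<^bsub>G\<^esub> x" "y \<in> carrier G" "D = Z #>\<^bsub>G\<^esub> y"
      by (auto simp: FactGroup_def RCOSETS_def)
    then show "the_elem (\<Psi> ` (C \<otimes>\<^bsub>G Mod Z\<^esub> D)) = the_elem (\<Psi> ` C) \<otimes>\<^bsub>T\<^esub> the_elem (\<Psi> ` D)"
      using coset hom by (simp add: FactGroup_def N.rcos_sum hom_mult)
  qed
qed

lemma FactGroup_FactGroup_iso:
  fixes G :: "('a, 'm) monoid_scheme" and T :: "('b, 'n) monoid_scheme"
  assumes G: "group G" and N: "Z \<lhd> G" and T: "group T" and hom: "\<Psi> \<in> hom G T"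
    and surj: "\<Psi> ` carrier G = carrier T"
    and trivial: "\<And>z. z \<in> Z \<Longrightarrow> \<Psi> z = \<one>\<^bsub>T\<^esub>"
    and S: "S \<subseteq> carrier G"
    and ker: "\<And>x. x \<in> carrier G \<Longrightarrow> \<Psi> x = \<one>\<^bsub>T\<^esub> \<longleftrightarrow> (\<exists>s\<in>S. x \<in> Z #>\<^bsub>G\<^esub> s)"
  shows "(G Mod Z) Mod ((\<lambda>g. Z #>\<^bsub>G\<^esub> g) ` S) \<cong> T"
proof -
  interpret G: group G by (rule G)
  interpret N: normal Z G by (rule N)
  define h where "h = (\<lambda>C. the_elem (\<Psi> ` C))"
  interpret H: group_hom "G Mod Z" T h
    using FactGroup_induced_hom(1)[OF G N T hom trivial]
    by (simp add: h_def group_hom_def group_hom_axioms_def N.factorgroup_is_group T)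
  have h_coset: "h (Z #>\<^bsub>G\<^esub> x) = \<Psi> x" if "x \<in> carrier G" for x
    using FactGroup_induced_hom(2)[OF G N T hom trivial that] by (simp add: h_def)
  have cosets: "carrier (G Mod Z) = (\<lambda>x. Z #>\<^bsub>G\<^esub> x) ` carrier G"
    by (auto simp: FactGroup_def RCOSETS_def)
  have "h ` carrier (G Mod Z) = carrier T"
    using surj h_coset by (force simp: cosets image_image)
  moreover have "kernel (G Mod Z) T h = (\<lambda>g. Z #>\<^bsub>G\<^esub> g) ` S"
  proof -
    have key: "Z #>\<^bsub>G\<^esub> x \<in> (\<lambda>g. Z #>\<^bsub>G\<^esub> g) ` S \<longleftrightarrow> \<Psi> x = \<one>\<^bsub>T\<^esub>" if x: "x \<in> carrier G" for x
    proof
      assume "Z #>\<^bsub>G\<^esub> x \<in> (\<lambda>g. Z #>\<^bsub>G\<^esub> g) ` S"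
      then obtain s where "s \<in> S" "Z #>\<^bsub>G\<^esub> x = Z #>\<^bsub>G\<^esub> s" by auto
      then show "\<Psi> x = \<one>\<^bsub>T\<^esub>" using ker[OF x] G.rcos_self[OF x N.subgroup_axioms] by auto
    next
      assume "\<Psi> x = \<one>\<^bsub>T\<^esub>"
      then obtain s where "s \<in> S" "x \<in> Z #>\<^bsub>G\<^esub> s" using ker[OF x] by auto
      then show "Z #>\<^bsub>G\<^esub> x \<in> (\<lambda>g. Z #>\<^bsub>G\<^esub> g) ` S"
        using G.repr_independence[OF _ _ N.subgroup_axioms, of x s] S by (auto intro!: image_eqI[of _ _ s])
    qed
    show ?thesis
    proof (intro equalityI subsetI)
      fix C assume "C \<in> kernel (G Mod Z) T h"
      then obtain x where "x \<in> carrier G" "C = Z #>\<^bsub>G\<^esub> x" "h C = \<one>\<^bsub>T\<^esub>"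
        by (auto simp: kernel_def cosets)
      then show "C \<in> (\<lambda>g. Z #>\<^bsub>G\<^esub> g) ` S" using key h_coset by auto
    next
      fix C assume "C \<in> (\<lambda>g. Z #>\<^bsub>G\<^esub> g) ` S"
      then obtain s where s: "s \<in> S" "C = Z #>\<^bsub>G\<^esub> s" by auto
      with S have "s \<in> carrier G" by auto
      with s show "C \<in> kernel (G Mod Z) T h" using key h_coset by (auto simp: kernel_def cosets)
    qed
  qed
  ultimately show ?thesis using H.FactGroup_iso by simp
qed

lemma hom_image_mult_closed:
  assumes "monoid G" "h \<in> hom G H" "a \<in> h ` carrier G" "b \<in> h ` carrier G"
  shows "a \<otimes>\<^bsub>H\<^esub> b \<in> h ` carrier G"
proof -
  obtain x y where "x \<in> carrier G" "y \<in> carrier G" "a = h x" "b = h y" using assms(3,4) by blast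
  then show ?thesis using assms(1,2) by (metis hom_mult image_eqI monoid.m_closed)
qed

lemma rat_common_denominator:
  fixes a b c d :: rat
  obtains D m0 m1 m2 m3 :: int where "D > 0" "a = of_int m0 / of_int D" "b = of_int m1 / of_int D"
    "c = of_int m2 / of_int D" "d = of_int m3 / of_int D"
proof -
  obtain p0 q0 where 0: "quotient_of a = (p0, q0)" by fastforce
  obtain p1 q1 where 1: "quotient_of b = (p1, q1)" by fastforce
  obtain p2 q2 where 2: "quotient_of c = (p2, q2)" by fastforce
  obtain p3 q3 where 3: "quotient_of d = (p3, q3)" by fastforce
  have q: "q0 > 0" "q1 > 0" "q2 > 0" "q3 > 0" using 0 1 2 3 quotient_of_denom_pos by blast+
  have e: "a = of_int p0 / of_int q0" "b = of_int p1 / of_int q1"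
    "c = of_int p2 / of_int q2" "d = of_int p3 / of_int q3"
    using 0 1 2 3 quotient_of_div by blast+
  show ?thesis
    by (rule that[of "q0 * q1 * q2 * q3" "p0 * q1 * q2 * q3" "p1 * q0 * q2 * q3"
          "p2 * q0 * q1 * q3" "p3 * q0 * q1 * q2"]) (use q in \<open>auto simp: e\<close>)
qed

lemma int_primitive_part:
  fixes m0 m1 m2 m3 :: int
  assumes "\<not> (m0 = 0 \<and> m1 = 0 \<and> m2 = 0 \<and> m3 = 0)"
  obtains G n0 n1 n2 n3 where "G > 0" "m0 = G * n0" "m1 = G * n1" "m2 = G * n2" "m3 = G * n3"
    "gcd (gcd n0 n1) (gcd n2 n3) = 1"
proof -
  define G where "G = gcd (gcd m0 m1) (gcd m2 m3)"
  have G_pos: "G > 0" using assms unfolding G_def by (simp add: le_less)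
  have "G dvd m0" "G dvd m1" "G dvd m2" "G dvd m3" unfolding G_def
    by (meson dvd_trans gcd_dvd1 gcd_dvd2)+
  then obtain n0 n1 n2 n3 where n: "m0 = G * n0" "m1 = G * n1" "m2 = G * n2" "m3 = G * n3"
    by (metis dvdE)
  have "gcd (gcd m0 m1) (gcd m2 m3) = G * gcd (gcd n0 n1) (gcd n2 n3)"
    using G_pos by (simp add: n flip: gcd_mult_distrib_int)
  then have "G = G * gcd (gcd n0 n1) (gcd n2 n3)" by (simp add: G_def)
  with G_pos have "gcd (gcd n0 n1) (gcd n2 n3) = 1" by simp
  with G_pos n show ?thesis by (rule that)
qed

lemma dvd_from_coprime_squares:
  fixes N k n0 n1 n2 n3 :: int
  assumes "N dvd k * n0^2" "N dvd k * n1^2" "N dvd k * n2^2" "N dvd k * n3^2"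
    and "gcd (gcd n0 n1) (gcd n2 n3) = 1"
  shows "N dvd k"
proof -
  have "N dvd gcd (gcd (k * n0^2) (k * n1^2)) (gcd (k * n2^2) (k * n3^2))"
    using assms by simp
  also have "\<dots> = \<bar>k\<bar> * gcd (gcd (n0^2) (n1^2)) (gcd (n2^2) (n3^2))"
    by (simp add: gcd_mult_distrib_int[symmetric] abs_mult)
  also have "gcd (gcd (n0^2) (n1^2)) (gcd (n2^2) (n3^2)) = (gcd (gcd n0 n1) (gcd n2 n3))^2"
    by (simp add: gcd_exp)
  finally show ?thesis using assms(5) by simp
qed

lemma rat_pos_cases:
  assumes "(q::rat) > 0"
  obtains a b :: int where "a > 0" "b > 0" "q = of_int a / of_int b"
proof -
  obtain a b where ab: "quotient_of q = (a, b)" by fastforce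
  have "b > 0" using ab quotient_of_denom_pos by blast
  moreover have q: "q = of_int a / of_int b" using ab quotient_of_div by blast
  moreover have "a > 0" using assms q \<open>b > 0\<close> by (simp add: zero_less_divide_iff)
  ultimately show ?thesis using that by blast
qed

text \<open>For \<open>q = a / b\<close> in lowest terms, \<open>v\<^sub>p(q)\<close> and \<open>v\<^sub>p(a b)\<close> have the same parity.\<close>
definition val_parity :: "int \<Rightarrow> rat \<Rightarrow> int" where
  "val_parity p q = (case quotient_of q of (a, b) \<Rightarrow> int (multiplicity p (a * b) mod 2))"

lemma val_parity_range: "val_parity p q \<in> {0, 1}"
  by (auto simp: val_parity_def split: prod.split)

lemma val_parity_frac:
  assumes p: "Factorial_Ring.prime p" and a: "a > 0" and b: "b > 0"
  shows "val_parity p (of_int a / of_int b) = int (multiplicity p (a * b) mod 2)"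
proof -
  obtain a' b' where q: "quotient_of (of_int a / of_int b) = (a', b')" by fastforce
  have b': "b' > 0" using q quotient_of_denom_pos by blast
  have "(of_int a / of_int b :: rat) = of_int a' / of_int b'" using q quotient_of_div by blast
  then have "rat_of_int (a * b') = of_int (a' * b)" using b b' by (simp add: field_simps)
  then have cross: "a * b' = a' * b" by (simp only: of_int_eq_iff)
  then have a': "a' > 0" using a b b' by (metis mult_pos_pos zero_less_mult_pos2)
  have "(a * b) * (b' * b') = (a' * b') * (b * b)"
    by (metis cross mult.assoc mult.left_commute)
  then have "multiplicity p ((a * b) * (b' * b')) = multiplicity p ((a' * b') * (b * b))"
    by (simp only:)
  then have "multiplicity p (a * b) + 2 * multiplicity p b' = multiplicity p (a' * b') + 2 * multiplicity p b"
    using a b b' a' by (simp add: prime_elem_multiplicity_mult_distrib[OF prime_imp_prime_elem[OF p]])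
  then have "multiplicity p (a * b) mod 2 = multiplicity p (a' * b') mod 2" by presburger
  then show ?thesis using q by (simp add: val_parity_def)
qed

lemma val_parity_mult:
  assumes p: "Factorial_Ring.prime p" and "q1 > 0" "q2 > 0"
  shows "val_parity p (q1 * q2) = (val_parity p q1 + val_parity p q2) mod 2"
proof -
  obtain a1 b1 where 1: "a1 > 0" "b1 > 0" "q1 = of_int a1 / of_int b1" using rat_pos_cases assms(2) by blast
  obtain a2 b2 where 2: "a2 > 0" "b2 > 0" "q2 = of_int a2 / of_int b2" using rat_pos_cases assms(3) by blast
  have "q1 * q2 = of_int (a1 * a2) / of_int (b1 * b2)" using 1 2 by simp
  then have "val_parity p (q1 * q2) = int (multiplicity p ((a1 * a2) * (b1 * b2)) mod 2)"
    using val_parity_frac[OF p, of "a1 * a2" "b1 * b2"] 1 2 by simp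
  also have "(a1 * a2) * (b1 * b2) = (a1 * b1) * (a2 * b2)" by (simp add: ac_simps)
  also have "multiplicity p ((a1 * b1) * (a2 * b2)) = multiplicity p (a1 * b1) + multiplicity p (a2 * b2)"
    using 1 2 by (simp add: prime_elem_multiplicity_mult_distrib[OF prime_imp_prime_elem[OF p]])
  finally show ?thesis
    using val_parity_frac[OF p 1(1,2)] val_parity_frac[OF p 2(1,2)] 1 2
    by (simp add: zmod_int add.commute mod_add_eq)
qed

lemma val_parity_square:
  assumes p: "Factorial_Ring.prime p" and r: "r \<noteq> 0"
  shows "val_parity p (r^2) = 0"
proof -
  obtain c d where cd: "quotient_of r = (c, d)" by fastforce
  have d: "d > 0" using cd quotient_of_denom_pos by blast
  have r_eq: "r = of_int c / of_int d" using cd quotient_of_div by blast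
  with r have c: "c \<noteq> 0" by auto
  have r2: "r^2 = of_int (c * c) / of_int (d * d)" using r_eq by (simp add: power2_eq_square)
  have "c * c > 0" "d * d > 0" using c d by (auto simp: zero_less_mult_iff)
  then have "val_parity p (r^2) = int (multiplicity p ((c * c) * (d * d)) mod 2)"
    unfolding r2 by (rule val_parity_frac[OF p])
  also have "multiplicity p ((c * c) * (d * d)) = 2 * (multiplicity p c + multiplicity p d)"
    using c d by (simp add: prime_elem_multiplicity_mult_distrib[OF prime_imp_prime_elem[OF p]])
  finally show ?thesis by simp
qed

lemma val_parity_mult_square:
  assumes "Factorial_Ring.prime p" "r \<noteq> 0" "q > 0"
  shows "val_parity p (r^2 * q) = val_parity p q"
  using val_parity_mult[of p "r^2" q] val_parity_square[of p r] val_parity_range[of p q] assms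
  by auto

lemma multiplicity_divisor_of_non_square_multiple:
  fixes p N m :: int
  assumes p: "Factorial_Ring.prime p" and N: "N > 0" "N dvd m" and p2: "\<not> p^2 dvd m"
  shows "multiplicity p N = (if p dvd N then 1 else 0)"
proof (cases "p dvd N")
  case True
  then obtain k where k: "N = p * k" by (elim dvdE)
  have "\<not> p dvd k"
  proof
    assume "p dvd k"
    then have "p^2 dvd N" using k by (simp add: power2_eq_square)
    then show False using p2 N dvd_trans by blast
  qed
  moreover have "k \<noteq> 0" using k N by auto
  moreover have "p \<noteq> 0" "\<not> is_unit p" using p by auto
  ultimately show ?thesis
    using True k multiplicity_times_same[of k p] not_dvd_imp_multiplicity_0 by simp
qed (simp add: not_dvd_imp_multiplicity_0)

lemma val_parity_of_int_divisor:
  assumes "Factorial_Ring.prime p" "N > 0" "N dvd m" "\<not> p^2 dvd m"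
  shows "val_parity p (of_int N) = (if p dvd N then 1 else 0)"
  using val_parity_frac[of p N 1] multiplicity_divisor_of_non_square_multiple[of p N m] assms by simp

lemma divisor_of_30_eq_1:
  fixes N :: int
  assumes "N > 0" "N dvd 30" "\<not> 2 dvd N" "\<not> 3 dvd N" "\<not> 5 dvd N"
  shows "N = 1"
proof -
  have "coprime 2 N" "coprime 3 N" "coprime 5 N"
    using assms by (simp_all add: prime_imp_coprime)
  then have "coprime 30 N"
    using coprime_mult_left_iff[of "2 * 3 :: int" 5 N] coprime_mult_left_iff[of "2 :: int" 3 N] by simp
  then have "is_unit N" using assms(2) by (meson coprime_common_divisor coprime_commute dvd_refl)
  then show ?thesis using assms(1) by simp
qed

subsection \<open>Arithmetic in the basis \<open>1, w\<^sub>1, w\<^sub>2, w\<^sub>3\<close>\<close>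

lemma qmul_Quat: "qmul (Quat a0 a1 a2 a3) (Quat b0 b1 b2 b3) = Quat
 (a0 * b0 + 48 * a1 * b1 + 12 * a1 * b2 + 12 * a2 * b1 + 48 * a2 * b2 - 240 * a3 * b3)
 (a0 * b1 + a1 * b0 + 4 * a1 * b3 + 16 * a2 * b3 - 4 * a3 * b1 - 16 * a3 * b2)
 (a0 * b2 - 16 * a1 * b3 + a2 * b0 - 4 * a2 * b3 + 16 * a3 * b1 + 4 * a3 * b2)
 (a0 * b3 - 3 * a1 * b2 + 3 * a2 * b1 + a3 * b0)"
  by (simp add: qmul_def qsum_def qadd_def qscale_def qzero_def qone_def qof_def e1_def e2_def e3_def
      algebra_simps)

lemma qmul_assoc: "qmul (qmul x y) z = qmul x (qmul y z)"
  by (cases x; cases y; cases z) (simp add: qmul_Quat algebra_simps)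

text \<open>\<open>wquat a b c d = a + b w\<^sub>1 + c w\<^sub>2 + d w\<^sub>3\<close>.\<close>
definition wquat :: "rat \<Rightarrow> rat \<Rightarrow> rat \<Rightarrow> rat \<Rightarrow> quat" where
  "wquat a b c d = Quat (a + d/2) (b/6) (c/2 - b/6) (d/8)"

lemma quat_eq_wquat: "x = wquat (qc x 0 - 4 * qc x 3) (6 * qc x 1) (2 * qc x 1 + 2 * qc x 2) (8 * qc x 3)"
  by (cases x) (simp add: wquat_def field_simps)

lemma wquat_cases: obtains a b c d where "x = wquat a b c d"
  using quat_eq_wquat by blast

lemma wquat_eq_iff [simp]: "wquat a b c d = wquat a' b' c' d' \<longleftrightarrow> a = a' \<and> b = b' \<and> c = c' \<and> d = d'"
  by (auto simp: wquat_def)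

lemma qmul_wquat: "qmul (wquat a0 a1 a2 a3) (wquat b0 b1 b2 b3) = wquat
 (a0 * b0 + 2 * a1 * b1 - 2 * a1 * b2 - 4 * a2 * b1 + 12 * a2 * b2 - 4 * a3 * b3)
 (a0 * b1 + a1 * b0 - a1 * b3 + 6 * a2 * b3 + 2 * a3 * b1 - 6 * a3 * b2)
 (a0 * b2 - a1 * b3 + a2 * b0 + 2 * a2 * b3 + a3 * b1 - a3 * b2)
 (a0 * b3 - 2 * a1 * b2 + 2 * a2 * b1 + a3 * b0 + a3 * b3)"
  by (simp add: wquat_def qmul_Quat field_simps)

lemma qadd_wquat: "qadd (wquat a b c d) (wquat a' b' c' d') = wquat (a + a') (b + b') (c + c') (d + d')"
  by (simp add: wquat_def qadd_def algebra_simps)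

lemma qscale_wquat: "qscale r (wquat a b c d) = wquat (r * a) (r * b) (r * c) (r * d)"
  by (simp add: wquat_def qscale_def algebra_simps)

lemma qconj_wquat: "qconj (wquat a b c d) = wquat (a + d) (- b) (- c) (- d)"
  by (simp add: wquat_def qconj_def algebra_simps)

lemma qof_wquat: "qof r = wquat r 0 0 0" by (simp add: wquat_def qof_def)
lemma qone_wquat: "qone = wquat 1 0 0 0" by (simp add: qone_def qof_wquat)
lemma w1_wquat: "w1 = wquat 0 1 0 0" by (simp add: w1_def wquat_def qsub_def qadd_def qscale_def e1_def e2_def)
lemma w2_wquat: "w2 = wquat 0 0 1 0" by (simp add: w2_def wquat_def qscale_def e2_def)
lemma w3_wquat: "w3 = wquat 0 0 0 1" by (simp add: w3_def wquat_def qadd_def qscale_def e3_def qone_def qof_def)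

definition nrd_form :: "'a::comm_ring_1 \<Rightarrow> 'a \<Rightarrow> 'a \<Rightarrow> 'a \<Rightarrow> 'a" where
  "nrd_form a b c d = a^2 + a * d - 2 * b^2 + 6 * b * c - 12 * c^2 + 4 * d^2"

lemma nrd_form_of_int: "nrd_form (of_int a) (of_int b) (of_int c) (of_int d) = of_int (nrd_form a b c d)"
  by (simp add: nrd_form_def)

lemma qmul_qconj_wquat: "qmul (wquat a b c d) (qconj (wquat a b c d)) = qof (nrd_form a b c d)"
  "qmul (qconj (wquat a b c d)) (wquat a b c d) = qof (nrd_form a b c d)"
  by (simp_all add: qconj_wquat qmul_wquat qof_wquat nrd_form_def power2_eq_square algebra_simps)

lemma nrd_wquat: "nrd (wquat a b c d) = nrd_form a b c d"
  by (simp add: nrd_def qmul_qconj_wquat qof_def)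

lemma qmul_qconj: "qmul x (qconj x) = qof (nrd x)" "qmul (qconj x) x = qof (nrd x)"
  by (cases x rule: wquat_cases; simp add: qmul_qconj_wquat nrd_wquat)+

lemma nrd_qmul: "nrd (qmul x y) = nrd x * nrd y"
  by (cases x rule: wquat_cases; cases y rule: wquat_cases)
     (simp add: nrd_wquat qmul_wquat nrd_form_def power2_eq_square algebra_simps)

lemma nrd_qconj: "nrd (qconj x) = nrd x"
  by (cases x rule: wquat_cases) (simp add: qconj_wquat nrd_wquat nrd_form_def power2_eq_square algebra_simps)

lemma nrd_qscale: "nrd (qscale r x) = r^2 * nrd x"
  by (cases x rule: wquat_cases) (simp add: qscale_wquat nrd_wquat nrd_form_def power2_eq_square algebra_simps)

lemma nrd_qof: "nrd (qof r) = r^2"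
  by (simp add: qof_wquat nrd_wquat nrd_form_def)

lemma nrd_qone: "nrd qone = 1"
  by (simp add: qone_def nrd_qof)

lemma qconj_qmul: "qconj (qmul x y) = qmul (qconj y) (qconj x)"
  by (cases x rule: wquat_cases; cases y rule: wquat_cases) (simp add: qconj_wquat qmul_wquat algebra_simps)

lemma qmul_qone [simp]: "qmul x qone = x" "qmul qone x = x"
  by (cases x rule: wquat_cases; simp add: qone_wquat qmul_wquat)+

lemma qmul_qof: "qmul (qof r) x = qscale r x" "qmul x (qof r) = qscale r x"
  by (cases x rule: wquat_cases; simp add: qof_wquat qmul_wquat qscale_wquat algebra_simps)+

lemma qmul_qscale: "qmul (qscale r x) y = qscale r (qmul x y)" "qmul x (qscale r y) = qscale r (qmul x y)"
  by (cases x rule: wquat_cases; cases y rule: wquat_cases; simp add: qmul_wquat qscale_wquat algebra_simps)+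

lemma qmul_qadd: "qmul x (qadd y z) = qadd (qmul x y) (qmul x z)" "qmul (qadd y z) x = qadd (qmul y x) (qmul z x)"
  by (cases x rule: wquat_cases; cases y rule: wquat_cases; cases z rule: wquat_cases;
      simp add: qmul_wquat qadd_wquat algebra_simps)+

lemma qscale_qscale [simp]: "qscale r (qscale s x) = qscale (r * s) x"
  by (cases x rule: wquat_cases) (simp add: qscale_wquat algebra_simps)

lemma qscale_1 [simp]: "qscale 1 x = x"
  by (cases x rule: wquat_cases) (simp add: qscale_wquat)

lemma qscale_qone: "qscale r qone = qof r"
  by (simp add: qone_wquat qof_wquat qscale_wquat)

lemma qinv_unique: assumes "qmul x y = qone" "qmul y x = qone" shows "qinv x = y"
  unfolding qinv_def
proof (rule the_equality)
  show "qmul x y = qone \<and> qmul y x = qone" using assms by simp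
  fix z assume "qmul x z = qone \<and> qmul z x = qone"
  then have "qmul (qmul y x) z = y" by (simp add: qmul_assoc)
  then show "z = y" using assms by simp
qed

lemma qinv_eq:
  assumes "nrd x \<noteq> 0" shows "qinv x = qscale (1 / nrd x) (qconj x)"
  using assms by (intro qinv_unique) (simp_all add: qmul_qscale qmul_qconj qof_wquat qone_wquat qscale_wquat)

lemma qmul_qinv: "nrd x \<noteq> 0 \<Longrightarrow> qmul x (qinv x) = qone" "nrd x \<noteq> 0 \<Longrightarrow> qmul (qinv x) x = qone"
  by (simp_all add: qinv_eq qmul_qscale qmul_qconj qof_wquat qone_wquat qscale_wquat)

lemma qmul_qinv_cancel: "nrd x \<noteq> 0 \<Longrightarrow> qmul (qinv x) (qmul x y) = y"
  "nrd x \<noteq> 0 \<Longrightarrow> qmul x (qmul (qinv x) y) = y"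
  by (simp_all add: qmul_qinv flip: qmul_assoc)

lemma Bunits_iff: "x \<in> Bunits \<longleftrightarrow> nrd x \<noteq> 0"
proof
  assume "x \<in> Bunits"
  then obtain y where "qmul x y = qone" unfolding Bunits_def by auto
  then have "nrd x * nrd y = 1" using nrd_qmul[of x y] by (simp add: nrd_qone)
  then show "nrd x \<noteq> 0" by auto
qed (auto simp: Bunits_def dest: qmul_qinv)

lemma nrd_qinv: "nrd x \<noteq> 0 \<Longrightarrow> nrd (qinv x) = 1 / nrd x"
  by (simp add: qinv_eq nrd_qscale nrd_qconj power2_eq_square)

lemma qinv_qmul: "nrd x \<noteq> 0 \<Longrightarrow> nrd y \<noteq> 0 \<Longrightarrow> qinv (qmul x y) = qmul (qinv y) (qinv x)"
  by (simp add: qinv_eq nrd_qmul qconj_qmul qmul_qscale)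

lemma qinv_qinv: "nrd x \<noteq> 0 \<Longrightarrow> qinv (qinv x) = x"
  by (intro qinv_unique) (simp_all add: qmul_qinv)

lemma qinv_qof: "r \<noteq> 0 \<Longrightarrow> qinv (qof r) = qof (1 / r)"
  by (intro qinv_unique) (simp_all add: qof_wquat qmul_wquat qone_wquat)

lemma qinv_qscale: "r \<noteq> 0 \<Longrightarrow> nrd x \<noteq> 0 \<Longrightarrow> qinv (qscale r x) = qscale (1 / r) (qinv x)"
  by (intro qinv_unique) (simp_all add: qmul_qscale qmul_qinv)

definition wint :: "int \<Rightarrow> int \<Rightarrow> int \<Rightarrow> int \<Rightarrow> quat" where
  "wint a b c d = wquat (of_int a) (of_int b) (of_int c) (of_int d)"

lemma Ord_iff: "x \<in> Ord \<longleftrightarrow> (\<exists>a b c d. x = wint a b c d)"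
  by (auto simp: Ord_def wint_def qof_wquat w1_wquat w2_wquat w3_wquat qscale_wquat qadd_wquat)

lemma wint_in_Ord [simp]: "wint a b c d \<in> Ord"
  using Ord_iff by blast

lemma wquat_in_Ord_iff: "wquat a b c d \<in> Ord \<longleftrightarrow> a \<in> \<int> \<and> b \<in> \<int> \<and> c \<in> \<int> \<and> d \<in> \<int>"
  by (auto simp: Ord_iff wint_def elim!: Ints_cases)

lemma wint_eq_iff [simp]: "wint a b c d = wint a' b' c' d' \<longleftrightarrow> a = a' \<and> b = b' \<and> c = c' \<and> d = d'"
  by (simp add: wint_def)

lemma qmul_wint: "qmul (wint a0 a1 a2 a3) (wint b0 b1 b2 b3) = wint
 (a0 * b0 + 2 * a1 * b1 - 2 * a1 * b2 - 4 * a2 * b1 + 12 * a2 * b2 - 4 * a3 * b3)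
 (a0 * b1 + a1 * b0 - a1 * b3 + 6 * a2 * b3 + 2 * a3 * b1 - 6 * a3 * b2)
 (a0 * b2 - a1 * b3 + a2 * b0 + 2 * a2 * b3 + a3 * b1 - a3 * b2)
 (a0 * b3 - 2 * a1 * b2 + 2 * a2 * b1 + a3 * b0 + a3 * b3)"
  by (simp add: wint_def qmul_wquat)

lemma qadd_wint: "qadd (wint a b c d) (wint a' b' c' d') = wint (a + a') (b + b') (c + c') (d + d')"
  by (simp add: wint_def qadd_wquat)

lemma qscale_wint: "qscale (of_int k) (wint a b c d) = wint (k * a) (k * b) (k * c) (k * d)"
  by (simp add: wint_def qscale_wquat)

lemma qconj_wint: "qconj (wint a b c d) = wint (a + d) (- b) (- c) (- d)"
  by (simp add: wint_def qconj_wquat)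

lemma nrd_wint: "nrd (wint a b c d) = of_int (nrd_form a b c d)"
  by (simp add: wint_def nrd_wquat nrd_form_of_int)

lemma qof_wint: "qof (of_int k) = wint k 0 0 0" by (simp add: wint_def qof_wquat)
lemma qone_wint: "qone = wint 1 0 0 0" by (simp add: wint_def qone_wquat)
lemma w1_wint: "w1 = wint 0 1 0 0" by (simp add: wint_def w1_wquat)
lemma w2_wint: "w2 = wint 0 0 1 0" by (simp add: wint_def w2_wquat)
lemma w3_wint: "w3 = wint 0 0 0 1" by (simp add: wint_def w3_wquat)

lemma qone_in_Ord [simp]: "qone \<in> Ord" by (simp add: qone_wint)
lemma Ord_qmul: "x \<in> Ord \<Longrightarrow> y \<in> Ord \<Longrightarrow> qmul x y \<in> Ord" by (auto simp: Ord_iff qmul_wint)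
lemma Ord_qadd: "x \<in> Ord \<Longrightarrow> y \<in> Ord \<Longrightarrow> qadd x y \<in> Ord" by (auto simp: Ord_iff qadd_wint)
lemma Ord_qscale: "x \<in> Ord \<Longrightarrow> qscale (of_int k) x \<in> Ord" by (auto simp: Ord_iff qscale_wint)
lemma Ord_qconj: "x \<in> Ord \<Longrightarrow> qconj x \<in> Ord" by (auto simp: Ord_iff qconj_wint)

lemma Ord_qsub: "x \<in> Ord \<Longrightarrow> y \<in> Ord \<Longrightarrow> qsub x y \<in> Ord"
  unfolding qsub_def using Ord_qadd Ord_qscale[of y "-1"] by simp

lemma Ord_cases:
  assumes "x \<in> Ord" obtains a b c d where "x = wint a b c d"
  using assms by (auto simp: Ord_iff)

lemma Ord1_cases:
  assumes "x \<in> Ord1" obtains a b c d where "x = wint a b c d" "nrd_form a b c d = 1"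
  using assms by (auto simp: Ord1_def Ord_iff nrd_wint)

lemma Ord1_qmul: "x \<in> Ord1 \<Longrightarrow> y \<in> Ord1 \<Longrightarrow> qmul x y \<in> Ord1"
  by (simp add: Ord1_def Ord_qmul nrd_qmul)

lemma Ord1_qconj: "x \<in> Ord1 \<Longrightarrow> qconj x \<in> Ord1"
  by (simp add: Ord1_def Ord_qconj nrd_qconj)

lemma qone_in_Ord1: "qone \<in> Ord1"
  by (simp add: Ord1_def nrd_qone)

lemma minus_one_in_Ord1: "qof (-1) \<in> Ord1"
  using qof_wint[of "-1"] by (simp add: Ord1_def nrd_wint nrd_form_def)

definition conjugate :: "quat \<Rightarrow> quat \<Rightarrow> quat" where
  "conjugate x y = qmul (qmul x y) (qinv x)"

lemma conjugate_eq: "nrd x \<noteq> 0 \<Longrightarrow> conjugate x y = qscale (1 / nrd x) (qmul (qmul x y) (qconj x))"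
  by (simp add: conjugate_def qinv_eq qmul_qscale)

lemma conjugate_conjugate: "nrd x \<noteq> 0 \<Longrightarrow> nrd y \<noteq> 0 \<Longrightarrow> conjugate (qmul x y) z = conjugate x (conjugate y z)"
  by (simp add: conjugate_def qinv_qmul qmul_assoc)

lemma conjugate_qinv: "nrd x \<noteq> 0 \<Longrightarrow> conjugate (qinv x) (conjugate x z) = z"
  "nrd x \<noteq> 0 \<Longrightarrow> conjugate x (conjugate (qinv x) z) = z"
  by (simp_all add: conjugate_def qinv_qinv qmul_assoc qmul_qinv_cancel qmul_qinv)

lemma conjugate_qadd: "conjugate x (qadd u v) = qadd (conjugate x u) (conjugate x v)"
  by (simp add: conjugate_def qmul_qadd)

lemma conjugate_qscale: "conjugate x (qscale r u) = qscale r (conjugate x u)"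
  by (simp add: conjugate_def qmul_qscale)

lemma conjugate_qmul: "nrd x \<noteq> 0 \<Longrightarrow> conjugate x (qmul u v) = qmul (conjugate x u) (conjugate x v)"
  by (simp add: conjugate_def qmul_assoc qmul_qinv_cancel)

lemma conjugate_qof: "nrd x \<noteq> 0 \<Longrightarrow> conjugate x (qof r) = qof r"
  by (simp add: conjugate_def qmul_qof qmul_qscale qmul_qinv qscale_qone)

lemma conjugate_qscale_left: "r \<noteq> 0 \<Longrightarrow> nrd x \<noteq> 0 \<Longrightarrow> conjugate (qscale r x) z = conjugate x z"
  by (simp add: conjugate_def qinv_qscale qmul_qscale)

lemma Nplus_iff: "x \<in> Nplus \<longleftrightarrow> nrd x > 0 \<and> conjugate x ` Ord = Ord"
  by (auto simp: Nplus_def Bunits_iff conjugate_def)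

lemma Nplus_nrd_pos: "x \<in> Nplus \<Longrightarrow> nrd x > 0"
  by (simp add: Nplus_iff)

lemma Nplus_nrd_nonzero: "x \<in> Nplus \<Longrightarrow> nrd x \<noteq> 0"
  by (simp add: Nplus_iff)

lemma Nplus_conjugate_Ord: "x \<in> Nplus \<Longrightarrow> z \<in> Ord \<Longrightarrow> conjugate x z \<in> Ord"
  by (auto simp: Nplus_iff)

lemma conjugate_Ord_subset:
  assumes "conjugate x w1 \<in> Ord" "conjugate x w2 \<in> Ord" "conjugate x w3 \<in> Ord" "nrd x \<noteq> 0"
  shows "conjugate x ` Ord \<subseteq> Ord"
proof
  have one: "conjugate x qone \<in> Ord"
    using conjugate_qof[OF assms(4), of 1] qone_in_Ord by (simp add: qone_def)
  fix y assume "y \<in> conjugate x ` Ord"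
  then obtain a b c d where "y = conjugate x (wint a b c d)" by (auto simp: Ord_iff)
  also have "wint a b c d = qadd (qscale (of_int a) qone) (qadd (qscale (of_int b) w1)
      (qadd (qscale (of_int c) w2) (qscale (of_int d) w3)))"
    by (simp add: qone_wint w1_wint w2_wint w3_wint qscale_wint qadd_wint)
  finally show "y \<in> Ord"
    by (simp only: conjugate_qadd conjugate_qscale) (intro Ord_qadd Ord_qscale one assms(1-3))
qed

lemma NplusI:
  assumes "nrd x > 0"
    and "conjugate x w1 \<in> Ord" "conjugate x w2 \<in> Ord" "conjugate x w3 \<in> Ord"
    and "conjugate (qconj x) w1 \<in> Ord" "conjugate (qconj x) w2 \<in> Ord" "conjugate (qconj x) w3 \<in> Ord"
  shows "x \<in> Nplus"
proof -
  have x: "nrd x \<noteq> 0" using assms(1) by simp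
  have "conjugate (qinv x) z = conjugate (qconj x) z" for z
    using x by (simp add: qinv_eq conjugate_qscale_left nrd_qconj)
  then have "conjugate (qinv x) ` Ord \<subseteq> Ord"
    using conjugate_Ord_subset[of "qconj x"] assms x by (simp add: nrd_qconj)
  have "Ord \<subseteq> conjugate x ` Ord"
  proof
    fix z assume "z \<in> Ord"
    then have "conjugate (qinv x) z \<in> Ord" using \<open>conjugate (qinv x) ` Ord \<subseteq> Ord\<close> by blast
    then show "z \<in> conjugate x ` Ord" using conjugate_qinv(2)[OF x, of z] by (metis image_eqI)
  qed
  then show ?thesis
    using conjugate_Ord_subset[OF assms(2-4) x] assms(1) by (simp add: Nplus_iff)
qed

lemma Ord1_subset_Nplus: "Ord1 \<subseteq> Nplus"
proof
  fix x assume "x \<in> Ord1"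
  then have x: "x \<in> Ord" "nrd x = 1" by (auto simp: Ord1_def)
  have "conjugate y z \<in> Ord" if "y \<in> Ord" "nrd y = 1" "z \<in> Ord" for y z
    using that by (simp add: conjugate_eq Ord_qmul Ord_qconj)
  from this[of x] this[of "qconj x"] show "x \<in> Nplus"
    using x by (intro NplusI) (simp_all add: Ord_qconj nrd_qconj w1_wint w2_wint w3_wint)
qed

lemma Nplus_qmul: assumes "x \<in> Nplus" "y \<in> Nplus" shows "qmul x y \<in> Nplus"
proof -
  have "conjugate (qmul x y) ` Ord = conjugate x ` conjugate y ` Ord"
    using assms by (auto simp: conjugate_conjugate Nplus_nrd_nonzero image_image)
  then show ?thesis using assms by (simp add: Nplus_iff nrd_qmul)
qed

lemma Nplus_qinv: assumes "x \<in> Nplus" shows "qinv x \<in> Nplus"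
proof -
  have "conjugate (qinv x) ` Ord = conjugate (qinv x) ` conjugate x ` Ord"
    using assms by (simp add: Nplus_iff)
  also have "\<dots> = Ord" using assms by (simp add: image_image conjugate_qinv Nplus_nrd_nonzero)
  finally show ?thesis using assms by (simp add: Nplus_iff nrd_qinv)
qed

lemma qof_in_Nplus: assumes "r \<noteq> 0" shows "qof r \<in> Nplus"
proof -
  have "conjugate (qof r) y = y" for y
    using assms by (simp add: conjugate_def qinv_qof qmul_qof qmul_qscale)
  then show ?thesis using assms by (simp add: Nplus_iff nrd_qof)
qed

lemma qone_in_Nplus: "qone \<in> Nplus"
  using qof_in_Nplus[of 1] by (simp add: qone_def)

lemma Nplus_qscale: "x \<in> Nplus \<Longrightarrow> r \<noteq> 0 \<Longrightarrow> qscale r x \<in> Nplus"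
  using Nplus_qmul[OF qof_in_Nplus] qmul_qof by metis

lemma Nplus_group_simps [simp]:
  "carrier Nplus_group = Nplus" "x \<otimes>\<^bsub>Nplus_group\<^esub> y = qmul x y" "\<one>\<^bsub>Nplus_group\<^esub> = qone"
  by (simp_all add: Nplus_group_def)

lemma Ord1_group_simps [simp]:
  "carrier Ord1_group = Ord1" "x \<otimes>\<^bsub>Ord1_group\<^esub> y = qmul x y" "\<one>\<^bsub>Ord1_group\<^esub> = qone"
  by (simp_all add: Ord1_group_def)

lemma group_Nplus_group: "group Nplus_group"
proof (rule groupI)
  fix x assume "x \<in> carrier Nplus_group"
  then show "\<exists>y\<in>carrier Nplus_group. y \<otimes>\<^bsub>Nplus_group\<^esub> x = \<one>\<^bsub>Nplus_group\<^esub>"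
    by (auto intro!: bexI[of _ "qinv x"] simp: Nplus_qinv qmul_qinv Nplus_nrd_nonzero)
qed (auto simp: Nplus_qmul qone_in_Nplus qmul_assoc)

lemma Nplus_group_inv: "x \<in> Nplus \<Longrightarrow> inv\<^bsub>Nplus_group\<^esub> x = qinv x"
  by (rule group.inv_equality[OF group_Nplus_group]) (auto simp: Nplus_qinv qmul_qinv Nplus_nrd_nonzero)

lemma group_Ord1_group: "group Ord1_group"
proof (rule groupI)
  fix x assume "x \<in> carrier Ord1_group"
  then show "\<exists>y\<in>carrier Ord1_group. y \<otimes>\<^bsub>Ord1_group\<^esub> x = \<one>\<^bsub>Ord1_group\<^esub>"
    using Ord1_qconj[of x] by (auto intro!: bexI[of _ "qconj x"] simp: qmul_qconj Ord1_def qone_def)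
qed (auto simp: Ord1_qmul qone_in_Ord1 qmul_assoc)

lemma Ord1_group_inv: "x \<in> Ord1 \<Longrightarrow> inv\<^bsub>Ord1_group\<^esub> x = qconj x"
  by (rule group.inv_equality[OF group_Ord1_group]) (use Ord1_qconj[of x] in \<open>auto simp: qmul_qconj Ord1_def qone_def\<close>)

lemma Qstar_normal: "Qstar \<lhd> Nplus_group"
proof -
  interpret group Nplus_group by (rule group_Nplus_group)
  have "subgroup Qstar Nplus_group"
  proof (rule subgroupI)
    show "Qstar \<subseteq> carrier Nplus_group" by (auto simp: Qstar_def qof_in_Nplus)
    show "Qstar \<noteq> {}" by (auto simp: Qstar_def intro: exI[of _ 1])
    fix a b assume "a \<in> Qstar" "b \<in> Qstar"
    then obtain r s where "a = qof r" "r \<noteq> 0" "b = qof s" "s \<noteq> 0" by (auto simp: Qstar_def)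
    then show "inv\<^bsub>Nplus_group\<^esub> a \<in> Qstar" "a \<otimes>\<^bsub>Nplus_group\<^esub> b \<in> Qstar"
      by (auto simp: Nplus_group_inv[OF qof_in_Nplus] Qstar_def qinv_qof)
         (auto simp: qof_wquat qmul_wquat)
  qed
  moreover have "x \<otimes>\<^bsub>Nplus_group\<^esub> h \<otimes>\<^bsub>Nplus_group\<^esub> inv\<^bsub>Nplus_group\<^esub> x \<in> Qstar"
    if "x \<in> Nplus" "h \<in> Qstar" for x h
    using that conjugate_qof[of x] by (auto simp: Qstar_def Nplus_group_inv Nplus_nrd_nonzero conjugate_def)
  ultimately show ?thesis by (simp add: normal_inv_iff)
qed

lemma plus_minus_one_normal: "{qone, qof (-1)} \<lhd> Ord1_group"
proof -
  interpret group Ord1_group by (rule group_Ord1_group)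
  have qconj_pm: "qconj qone = qone" "qconj (qof (-1)) = qof (-1)"
    by (simp_all add: qone_wquat qof_wquat qconj_wquat)
  have "subgroup {qone, qof (-1)} Ord1_group"
  proof (rule subgroupI)
    fix a b assume "a \<in> {qone, qof (-1)}" "b \<in> {qone, qof (-1)}"
    then show "inv\<^bsub>Ord1_group\<^esub> a \<in> {qone, qof (-1)}" "a \<otimes>\<^bsub>Ord1_group\<^esub> b \<in> {qone, qof (-1)}"
      using Ord1_group_inv qone_in_Ord1 minus_one_in_Ord1 qconj_pm
      by (auto simp: qmul_wquat qof_wquat qone_wquat)
  qed (simp_all add: qone_in_Ord1 minus_one_in_Ord1)
  moreover have "x \<otimes>\<^bsub>Ord1_group\<^esub> h \<otimes>\<^bsub>Ord1_group\<^esub> inv\<^bsub>Ord1_group\<^esub> x \<in> {qone, qof (-1)}"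
    if "x \<in> Ord1" "h \<in> {qone, qof (-1)}" for x h
  proof -
    have "nrd x = 1" using that(1) by (simp add: Ord1_def)
    then show ?thesis
      using that conjugate_qof[of x 1] conjugate_qof[of x "-1"]
      by (auto simp: Ord1_group_inv conjugate_def qinv_eq qone_def)
  qed
  ultimately show ?thesis by (simp add: normal_inv_iff)
qed

lemma Qstar_coset_iff: "x \<in> Qstar #>\<^bsub>Nplus_group\<^esub> s \<longleftrightarrow> (\<exists>r. r \<noteq> 0 \<and> x = qscale r s)"
  by (auto simp: r_coset_def Qstar_def qmul_qof)

lemma plus_minus_one_coset_iff: "x \<in> {qone, qof (-1)} #>\<^bsub>Ord1_group\<^esub> s \<longleftrightarrow> x = s \<or> x = qscale (-1) s"
  by (auto simp: r_coset_def qmul_qof)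

subsection \<open>Primitive parts of normalising elements\<close>

lemma conjugate_basis_numerators:
  "qmul (qmul (wint n0 n1 n2 n3) w1) (qconj (wint n0 n1 n2 n3)) = wint
    (- 2 * n0 * n2 + 2 * n1 * n3 - 4 * n2 * n3) (n0^2 + 4 * n0 * n3 - 2 * n1^2 + 12 * n2^2 - 2 * n3^2)
    (2 * n0 * n3 - 4 * n1 * n2 + 6 * n2^2 + n3^2) (4 * n0 * n2 - 4 * n1 * n3 + 8 * n2 * n3)"
  "qmul (qmul (wint n0 n1 n2 n3) w2) (qconj (wint n0 n1 n2 n3)) = wint
    (2 * n0 * n1 - 2 * n1 * n3 + 12 * n2 * n3) (- 12 * n0 * n3 + 6 * n1^2 - 24 * n1 * n2 - 6 * n3^2)
    (n0^2 - 2 * n0 * n3 + 2 * n1^2 - 12 * n2^2 - 5 * n3^2) (- 4 * n0 * n1 + 4 * n1 * n3 - 24 * n2 * n3)"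
  "qmul (qmul (wint n0 n1 n2 n3) w3) (qconj (wint n0 n1 n2 n3)) = wint
    (- 2 * n1^2 + 6 * n1 * n2 - 12 * n2^2) (- 3 * n0 * n1 + 12 * n0 * n2 + 6 * n1 * n3 + 6 * n2 * n3)
    (- 2 * n0 * n1 + 3 * n0 * n2 - n1 * n3 + 9 * n2 * n3)
    (n0^2 + n0 * n3 + 2 * n1^2 - 6 * n1 * n2 + 12 * n2^2 + 4 * n3^2)"
  by (simp_all add: w1_wint w2_wint w3_wint qconj_wint qmul_wint power2_eq_square algebra_simps)

text \<open>When \<open>wint n0 n1 n2 n3\<close> normalises \<open>O\<close>, its norm \<open>N\<close> divides all coordinates of the
  numerators above; five of them suffice to get \<open>N dvd 30 n\<^sub>i\<^sup>2\<close>.\<close>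
lemma nrd_form_dvd_30_mult_squares:
  fixes n0 n1 n2 n3 :: int
  defines "N \<equiv> nrd_form n0 n1 n2 n3"
  assumes h11: "N dvd n0^2 + 4 * n0 * n3 - 2 * n1^2 + 12 * n2^2 - 2 * n3^2"
    and h12: "N dvd 2 * n0 * n3 - 4 * n1 * n2 + 6 * n2^2 + n3^2"
    and h21: "N dvd - 12 * n0 * n3 + 6 * n1^2 - 24 * n1 * n2 - 6 * n3^2"
    and h22: "N dvd n0^2 - 2 * n0 * n3 + 2 * n1^2 - 12 * n2^2 - 5 * n3^2"
    and h30: "N dvd - 2 * n1^2 + 6 * n1 * n2 - 12 * n2^2"
  shows "N dvd 30 * n0^2" "N dvd 30 * n1^2" "N dvd 30 * n2^2" "N dvd 30 * n3^2"
proof -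
  have "30 * n0^2 = 16 * N + 10 * (n0^2 + 4 * n0 * n3 - 2 * n1^2 + 12 * n2^2 - 2 * n3^2)
      + (- 12) * (2 * n0 * n3 - 4 * n1 * n2 + 6 * n2^2 + n3^2)
      + 2 * (- 12 * n0 * n3 + 6 * n1^2 - 24 * n1 * n2 - 6 * n3^2)
      + 4 * (n0^2 - 2 * n0 * n3 + 2 * n1^2 - 12 * n2^2 - 5 * n3^2)
      + (- 16) * (- 2 * n1^2 + 6 * n1 * n2 - 12 * n2^2)"
    by (simp add: N_def nrd_form_def algebra_simps power2_eq_square)
  then show "N dvd 30 * n0^2" by (simp only:) (intro dvd_add dvd_mult h11 h12 h21 h22 h30 dvd_refl)
  have "30 * n1^2 = (- 6) * (n0^2 + 4 * n0 * n3 - 2 * n1^2 + 12 * n2^2 - 2 * n3^2)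
      + (- 3) * (- 12 * n0 * n3 + 6 * n1^2 - 24 * n1 * n2 - 6 * n3^2)
      + 6 * (n0^2 - 2 * n0 * n3 + 2 * n1^2 - 12 * n2^2 - 5 * n3^2)
      + (- 12) * (- 2 * n1^2 + 6 * n1 * n2 - 12 * n2^2)"
    by (simp add: algebra_simps power2_eq_square)
  then show "N dvd 30 * n1^2" by (simp only:) (intro dvd_add dvd_mult h11 h21 h22 h30)
  have "30 * n2^2 = (n0^2 + 4 * n0 * n3 - 2 * n1^2 + 12 * n2^2 - 2 * n3^2)
      + (- 3) * (2 * n0 * n3 - 4 * n1 * n2 + 6 * n2^2 + n3^2)
      + (- 1) * (n0^2 - 2 * n0 * n3 + 2 * n1^2 - 12 * n2^2 - 5 * n3^2)
      + (- 2) * (- 2 * n1^2 + 6 * n1 * n2 - 12 * n2^2)"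
    by (simp add: algebra_simps power2_eq_square)
  then show "N dvd 30 * n2^2" by (simp only:) (intro dvd_add dvd_mult h11 h12 h22 h30)
  have "30 * n3^2 = 4 * N + (- 2) * (n0^2 + 4 * n0 * n3 - 2 * n1^2 + 12 * n2^2 - 2 * n3^2)
      + (- 2) * (n0^2 - 2 * n0 * n3 + 2 * n1^2 - 12 * n2^2 - 5 * n3^2)
      + (- 4) * (- 2 * n1^2 + 6 * n1 * n2 - 12 * n2^2)"
    by (simp add: N_def nrd_form_def algebra_simps power2_eq_square)
  then show "N dvd 30 * n3^2" by (simp only:) (intro dvd_add dvd_mult h11 h22 h30 dvd_refl)
qed

lemma dvd_coords_of_qscale_in_Ord:
  fixes N a b c d :: int
  assumes "qscale (1 / of_int N) (wint a b c d) \<in> Ord" "N \<noteq> 0"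
  shows "N dvd a" "N dvd b" "N dvd c" "N dvd d"
proof -
  obtain m0 m1 m2 m3 where "qscale (1 / of_int N) (wint a b c d) = wint m0 m1 m2 m3"
    using assms(1) by (auto simp: Ord_iff)
  then have "rat_of_int a = of_int (N * m0)" "rat_of_int b = of_int (N * m1)"
    "rat_of_int c = of_int (N * m2)" "rat_of_int d = of_int (N * m3)"
    using assms(2) by (auto simp: wint_def qscale_wquat field_simps)
  then show "N dvd a" "N dvd b" "N dvd c" "N dvd d" by (simp_all only: of_int_eq_iff) auto
qed

lemma Nplus_primitive_decomposition:
  assumes x: "x \<in> Nplus"
  obtains g n0 n1 n2 n3 where "g > 0" "x = qscale g (wint n0 n1 n2 n3)"
    "nrd_form n0 n1 n2 n3 > 0" "nrd_form n0 n1 n2 n3 dvd 30"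
proof -
  obtain a b c d where x_eq: "x = wquat a b c d" by (rule wquat_cases)
  obtain D m0 m1 m2 m3 where D: "D > 0" "a = of_int m0 / of_int D" "b = of_int m1 / of_int D"
    "c = of_int m2 / of_int D" "d = of_int m3 / of_int D" by (rule rat_common_denominator)
  have "\<not> (m0 = 0 \<and> m1 = 0 \<and> m2 = 0 \<and> m3 = 0)"
    using Nplus_nrd_pos[OF x] x_eq D by (auto simp: nrd_wquat nrd_form_def)
  then obtain G n0 n1 n2 n3 where G: "G > 0" "m0 = G * n0" "m1 = G * n1" "m2 = G * n2" "m3 = G * n3"
    and coprime: "gcd (gcd n0 n1) (gcd n2 n3) = 1" by (rule int_primitive_part)
  define g where "g = rat_of_int G / of_int D"
  define y where "y = wint n0 n1 n2 n3"
  define N where "N = nrd_form n0 n1 n2 n3"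
  have g: "g > 0" using G D by (simp add: g_def)
  have x_g: "x = qscale g y"
    using x_eq D G by (simp add: g_def y_def wint_def qscale_wquat)
  then have y: "y \<in> Nplus" using Nplus_qscale[OF x, of "1/g"] g by simp
  have nrd_y: "nrd y = of_int N" by (simp add: y_def N_def nrd_wint)
  have N: "N > 0" using Nplus_nrd_pos[OF y] nrd_y by simp
  have numerator: "qscale (1 / of_int N) (qmul (qmul y z) (qconj y)) \<in> Ord" if "z \<in> Ord" for z
    using Nplus_conjugate_Ord[OF y that] conjugate_eq[of y z] nrd_y N by simp
  have N0: "N \<noteq> 0" using N by simp
  have w: "w1 \<in> Ord" "w2 \<in> Ord" "w3 \<in> Ord" by (simp_all add: w1_wint w2_wint w3_wint)
  note d1 = dvd_coords_of_qscale_in_Ord[OF numerator[OF w(1), unfolded y_def conjugate_basis_numerators] N0,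
      unfolded N_def]
  note d2 = dvd_coords_of_qscale_in_Ord[OF numerator[OF w(2), unfolded y_def conjugate_basis_numerators] N0,
      unfolded N_def]
  note d3 = dvd_coords_of_qscale_in_Ord[OF numerator[OF w(3), unfolded y_def conjugate_basis_numerators] N0,
      unfolded N_def]
  have "N dvd 30 * n0^2" "N dvd 30 * n1^2" "N dvd 30 * n2^2" "N dvd 30 * n3^2"
    unfolding N_def by (rule nrd_form_dvd_30_mult_squares[OF d1(2,3) d2(2,3) d3(1)])+
  then have "N dvd 30" using coprime by (rule dvd_from_coprime_squares)
  with g x_g N show ?thesis by (intro that) (simp_all add: y_def N_def)
qed

subsection \<open>Reduction modulo \<open>2 O\<close>\<close>

text \<open>Locally at 2, \<open>O\<close> is the Eichler order \<open>[[a, b], [2c, d]]\<close> of \<open>M\<^sub>2(\<int>\<^sub>2)\<close>. A residue class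
  in \<open>O / 2O\<close> is recorded by its entries \<open>(a, b, c, d)\<close> modulo 2, as booleans, so that \<open>O / 2O\<close> multiplies
  like matrices whose products \<open>b c\<close> vanish; \<open>w\<^sub>3\<close> becomes the idempotent \<open>E\<^sub>1\<^sub>1\<close>.\<close>
type_synonym o2 = "bool \<times> bool \<times> bool \<times> bool"

definition o2_zero :: o2 where "o2_zero = (False, False, False, False)"
definition o2_one :: o2 where "o2_one = (True, False, False, True)"

definition o2_add :: "o2 \<Rightarrow> o2 \<Rightarrow> o2" where
  "o2_add x y = (case x of (a, b, c, d) \<Rightarrow> case y of (a', b', c', d') \<Rightarrow>
     (a \<noteq> a', b \<noteq> b', c \<noteq> c', d \<noteq> d'))"

definition o2_mul :: "o2 \<Rightarrow> o2 \<Rightarrow> o2" where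
  "o2_mul x y = (case x of (a, b, c, d) \<Rightarrow> case y of (a', b', c', d') \<Rightarrow>
     (a \<and> a', (a \<and> b') \<noteq> (b \<and> d'), (c \<and> a') \<noteq> (d \<and> c'), d \<and> d'))"

definition wcoords :: "quat \<Rightarrow> rat \<times> rat \<times> rat \<times> rat" where
  "wcoords x = (qc x 0 - 4 * qc x 3, 6 * qc x 1, 2 * qc x 1 + 2 * qc x 2, 8 * qc x 3)"

lemma wcoords_wquat [simp]: "wcoords (wquat a b c d) = (a, b, c, d)"
  by (simp add: wcoords_def wquat_def field_simps)

definition red2 :: "quat \<Rightarrow> o2" where
  "red2 x = (case wcoords x of (a, b, c, d) \<Rightarrow> (odd \<lfloor>a + d\<rfloor>, odd \<lfloor>b + c\<rfloor>, odd \<lfloor>b\<rfloor>, odd \<lfloor>a\<rfloor>))"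

lemma red2_wquat [simp]: "red2 (wquat a b c d) = (odd \<lfloor>a + d\<rfloor>, odd \<lfloor>b + c\<rfloor>, odd \<lfloor>b\<rfloor>, odd \<lfloor>a\<rfloor>)"
  by (simp add: red2_def)

lemma red2_wint [simp]: "red2 (wint a b c d) = (odd (a + d), odd (b + c), odd b, odd a)"
  by (simp add: wint_def flip: of_int_add)

lemma red2_qone: "red2 qone = o2_one"
  by (simp add: qone_wint o2_one_def)

lemma red2_qmul: "x \<in> Ord \<Longrightarrow> y \<in> Ord \<Longrightarrow> red2 (qmul x y) = o2_mul (red2 x) (red2 y)"
  by (elim Ord_cases) (simp add: qmul_wint o2_mul_def, presburger)

lemma red2_qadd: "x \<in> Ord \<Longrightarrow> y \<in> Ord \<Longrightarrow> red2 (qadd x y) = o2_add (red2 x) (red2 y)"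
  by (elim Ord_cases) (simp add: qadd_wint o2_add_def, presburger)

lemma red2_qscale: "x \<in> Ord \<Longrightarrow> red2 (qscale (of_int k) x) = (if odd k then red2 x else o2_zero)"
  by (elim Ord_cases) (simp add: qscale_wint o2_zero_def)

lemma red2_qsub: "x \<in> Ord \<Longrightarrow> y \<in> Ord \<Longrightarrow> red2 (qsub x y) = o2_add (red2 x) (red2 y)"
  unfolding qsub_def using red2_qadd[OF _ Ord_qscale[of y "-1"]] red2_qscale[of y "-1"] by simp

lemma red2_qconj: "x \<in> Ord \<Longrightarrow> red2 (qconj x) = (case red2 x of (a, b, c, d) \<Rightarrow> (d, b, c, a))"
  by (elim Ord_cases) (auto simp: qconj_wint)

lemma red2_eq_zero_iff: "x \<in> Ord \<Longrightarrow> red2 x = o2_zero \<longleftrightarrow> x \<in> qscale 2 ` Ord"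
proof -
  assume "x \<in> Ord"
  then obtain a b c d where x: "x = wint a b c d" by (rule Ord_cases)
  show ?thesis
  proof
    assume "red2 x = o2_zero"
    then obtain a' b' c' d' where "a = 2 * a'" "b = 2 * b'" "c = 2 * c'" "d = 2 * d'"
      using x by (auto simp: o2_zero_def elim!: evenE)
    then have "x = qscale 2 (wint a' b' c' d')" using x qscale_wint[of 2 a' b' c' d'] by simp
    then show "x \<in> qscale 2 ` Ord" by auto
  next
    assume "x \<in> qscale 2 ` Ord"
    then show "red2 x = o2_zero" using red2_qscale[of _ 2] by auto
  qed
qed

lemma red2_qadd_double: "x \<in> Ord \<Longrightarrow> y \<in> Ord \<Longrightarrow> red2 (qadd x (qscale 2 y)) = red2 x"
  using red2_qadd[OF _ Ord_qscale[of y 2]] red2_qscale[of y 2] by (simp add: o2_add_def o2_zero_def split: prod.split)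

lemma Ord1_2_iff_red2: assumes "x \<in> Ord1" shows "x \<in> Ord1_2 \<longleftrightarrow> red2 x = o2_one"
proof -
  have x: "x \<in> Ord" using assms by (simp add: Ord1_def)
  have "x \<in> Ord1_2 \<longleftrightarrow> red2 (qsub x qone) = o2_zero"
    using assms red2_eq_zero_iff[OF Ord_qsub[OF x qone_in_Ord]] by (simp add: Ord1_2_def)
  also have "\<dots> \<longleftrightarrow> red2 x = o2_one"
    using red2_qsub[OF x qone_in_Ord]
    by (cases "red2 x") (auto simp: red2_qone o2_add_def o2_zero_def o2_one_def)
  finally show ?thesis .
qed

lemma odd_nrd_form: "odd (nrd_form n0 n1 n2 (n3::int)) \<Longrightarrow> odd n0 \<and> even n3"
  by (simp add: nrd_form_def power2_eq_square) presburger

lemma red2_Ord1: assumes "x \<in> Ord1" obtains b c where "red2 x = (True, b, c, True)"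
proof -
  obtain n0 n1 n2 n3 where x: "x = wint n0 n1 n2 n3" "nrd_form n0 n1 n2 n3 = 1"
    using assms by (rule Ord1_cases)
  then show ?thesis using odd_nrd_form[of n0 n1 n2 n3] that by simp
qed

subsection \<open>The conjugation action on \<open>O / 2O\<close>\<close>

lemma red2_conjugate_eq_zero_iff:
  assumes x: "x \<in> Nplus" and z: "z \<in> Ord"
  shows "red2 (conjugate x z) = o2_zero \<longleftrightarrow> red2 z = o2_zero"
proof
  assume "red2 (conjugate x z) = o2_zero"
  then obtain v where v: "v \<in> Ord" "conjugate x z = qscale 2 v"
    using red2_eq_zero_iff[OF Nplus_conjugate_Ord[OF x z]] by auto
  have "z = conjugate (qinv x) (conjugate x z)" using conjugate_qinv Nplus_nrd_nonzero[OF x] by simp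
  also have "\<dots> = qscale 2 (conjugate (qinv x) v)" using v by (simp add: conjugate_qscale)
  finally show "red2 z = o2_zero"
    using red2_eq_zero_iff[OF z] Nplus_conjugate_Ord[OF Nplus_qinv[OF x] v(1)] by auto
next
  assume "red2 z = o2_zero"
  then obtain v where "v \<in> Ord" "z = qscale 2 v" using red2_eq_zero_iff[OF z] by auto
  then show "red2 (conjugate x z) = o2_zero"
    using red2_eq_zero_iff[OF Nplus_conjugate_Ord[OF x z]] Nplus_conjugate_Ord[OF x]
    by (auto simp: conjugate_qscale)
qed

lemma red2_conjugate_qmul:
  "x \<in> Nplus \<Longrightarrow> u \<in> Ord \<Longrightarrow> v \<in> Ord \<Longrightarrow>
    red2 (conjugate x (qmul u v)) = o2_mul (red2 (conjugate x u)) (red2 (conjugate x v))"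
  by (simp add: conjugate_qmul Nplus_nrd_nonzero red2_qmul Nplus_conjugate_Ord)

lemma red2_conjugate_qadd_double:
  "x \<in> Nplus \<Longrightarrow> u \<in> Ord \<Longrightarrow> v \<in> Ord \<Longrightarrow> red2 (conjugate x (qadd u (qscale 2 v))) = red2 (conjugate x u)"
  using red2_qadd_double[OF Nplus_conjugate_Ord Nplus_conjugate_Ord]
  by (simp add: conjugate_qadd conjugate_qscale)

text \<open>For an idempotent \<open>e = (a, b, c, d)\<close> with \<open>a \<noteq> d\<close>, the automorphism of \<open>O / 2O\<close>
  mapping \<open>E\<^sub>1\<^sub>1\<close> to \<open>e\<close>.\<close>
definition o2_aut :: "o2 \<Rightarrow> o2 \<Rightarrow> o2" where
  "o2_aut e y = (case e of (ea, eb, ec, ed) \<Rightarrow> case y of (a, b, c, d) \<Rightarrow>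
     if ea then (a, b \<noteq> (a \<noteq> d \<and> eb), c \<noteq> (a \<noteq> d \<and> ec), d)
     else (d, c \<noteq> (a \<noteq> d \<and> eb), b \<noteq> (a \<noteq> d \<and> ec), a))"

lemma o2_corner_12:
  "o2_mul (ea, eb, ec, ed) (ea, eb, ec, ed) = (ea, eb, ec, ed) \<Longrightarrow> (ea, eb, ec, ed) \<noteq> o2_zero \<Longrightarrow>
   o2_add o2_one (ea, eb, ec, ed) \<noteq> o2_zero \<Longrightarrow>
   (p1, p2, p3, p4) = o2_mul (o2_mul (ea, eb, ec, ed) (p1, p2, p3, p4)) (o2_add o2_one (ea, eb, ec, ed)) \<Longrightarrow>
   (p1, p2, p3, p4) \<noteq> o2_zero \<Longrightarrow>
   ea \<noteq> ed \<and> (p1, p2, p3, p4) = (if ea then (False, True, False, False) else (False, False, True, False))"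
  by (cases ea; cases eb; cases ec; cases ed; cases p1; cases p2; cases p3; cases p4;
      simp add: o2_mul_def o2_add_def o2_zero_def o2_one_def)

lemma o2_corner_21:
  "o2_mul (ea, eb, ec, ed) (ea, eb, ec, ed) = (ea, eb, ec, ed) \<Longrightarrow> (ea, eb, ec, ed) \<noteq> o2_zero \<Longrightarrow>
   o2_add o2_one (ea, eb, ec, ed) \<noteq> o2_zero \<Longrightarrow>
   (q1, q2, q3, q4) = o2_mul (o2_mul (o2_add o2_one (ea, eb, ec, ed)) (q1, q2, q3, q4)) (ea, eb, ec, ed) \<Longrightarrow>
   (q1, q2, q3, q4) \<noteq> o2_zero \<Longrightarrow>
   (q1, q2, q3, q4) = (if ea then (False, False, True, False) else (False, True, False, False))"
  by (cases ea; cases eb; cases ec; cases ed; cases q1; cases q2; cases q3; cases q4;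
      simp add: o2_mul_def o2_add_def o2_zero_def o2_one_def)

definition o2_if :: "bool \<Rightarrow> o2 \<Rightarrow> o2" where "o2_if k v = (if k then v else o2_zero)"

lemma o2_aut_eq_sum: "ea \<noteq> ed \<Longrightarrow>
  o2_add (o2_if a (ea, eb, ec, ed))
   (o2_add (o2_if b (if ea then (False, True, False, False) else (False, False, True, False)))
   (o2_add (o2_if c (if ea then (False, False, True, False) else (False, True, False, False)))
     (o2_if d (o2_add o2_one (ea, eb, ec, ed)))))
  = o2_aut (ea, eb, ec, ed) (a, b, c, d)"
  by (cases ea; cases eb; cases ec; cases ed; cases a; cases b; cases c; cases d;
      simp add: o2_aut_def o2_add_def o2_zero_def o2_one_def o2_if_def)

text \<open>Elements of \<open>O\<close> reducing to the matrix units of \<open>O / 2O\<close>.\<close>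
definition E11 :: quat where "E11 = wint 0 0 0 1"
definition E12 :: quat where "E12 = wint 0 0 1 0"
definition E21 :: quat where "E21 = wint 0 1 1 0"
definition E22 :: quat where "E22 = wint 1 0 0 (-1)"

lemmas matrix_unit_defs = E11_def E12_def E21_def E22_def

lemma matrix_units_in_Ord: "E11 \<in> Ord" "E12 \<in> Ord" "E21 \<in> Ord" "E22 \<in> Ord"
  by (simp_all add: matrix_unit_defs)

lemma matrix_units_relations:
  "qmul E11 E11 = qadd E11 (qscale 2 (wint (-2) 0 0 0))"
  "qmul (qmul E11 E12) E22 = qadd E12 (qscale 2 (wint 0 (-3) (-3) 0))"
  "qmul (qmul E22 E21) E11 = qadd E21 (qscale 2 (wint 0 0 (-2) 0))"
  "E22 = qsub qone E11"
  using qscale_wint[of 2] qscale_wint[of "-1"]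
  by (simp_all add: matrix_unit_defs qmul_wint qadd_wint qone_wint qsub_def)

lemma wint_eq_matrix_units: "wint a b c d = qadd (qscale (of_int (a + d)) E11)
    (qadd (qscale (of_int (c - b)) E12) (qadd (qscale (of_int b) E21) (qscale (of_int a) E22)))"
  by (simp add: matrix_unit_defs qscale_wint qadd_wint algebra_simps del: of_int_add of_int_diff)

definition idem_image :: "quat \<Rightarrow> o2" where
  "idem_image x = red2 (conjugate x E11)"

text \<open>The conjugates of the matrix units satisfy the relations above modulo \<open>2O\<close>, and none
  of them lies in \<open>2O\<close>; this pins down the images of \<open>E\<^sub>1\<^sub>2\<close> and \<open>E\<^sub>2\<^sub>1\<close> in terms of that of \<open>E\<^sub>1\<^sub>1\<close>.\<close>
lemma red2_conjugate_matrix_units: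
  assumes x: "x \<in> Nplus"
  obtains ea eb ec ed where "idem_image x = (ea, eb, ec, ed)" "ea \<noteq> ed"
    "red2 (conjugate x E12) = (if ea then (False, True, False, False) else (False, False, True, False))"
    "red2 (conjugate x E21) = (if ea then (False, False, True, False) else (False, True, False, False))"
    "red2 (conjugate x E22) = o2_add o2_one (ea, eb, ec, ed)"
proof -
  note units = matrix_units_in_Ord
  obtain ea eb ec ed where e: "red2 (conjugate x E11) = (ea, eb, ec, ed)"
    by (cases "red2 (conjugate x E11)") auto
  obtain p1 p2 p3 p4 where p: "red2 (conjugate x E12) = (p1, p2, p3, p4)"
    by (cases "red2 (conjugate x E12)") auto
  obtain q1 q2 q3 q4 where q: "red2 (conjugate x E21) = (q1, q2, q3, q4)"
    by (cases "red2 (conjugate x E21)") auto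
  have f: "red2 (conjugate x E22) = o2_add o2_one (ea, eb, ec, ed)"
    using e red2_qsub[OF qone_in_Ord Nplus_conjugate_Ord[OF x units(1)]] conjugate_qof[of x 1]
      Nplus_nrd_nonzero[OF x]
    by (simp add: matrix_units_relations(4) conjugate_qadd conjugate_qscale qsub_def red2_qone flip: qone_def)
  have idem: "o2_mul (ea, eb, ec, ed) (ea, eb, ec, ed) = (ea, eb, ec, ed)"
    using e red2_conjugate_qmul[OF x units(1,1)] red2_conjugate_qadd_double[OF x units(1)]
    by (simp add: matrix_units_relations(1))
  have "red2 (conjugate x (qmul (qmul E11 E12) E22)) = red2 (conjugate x E12)"
    using red2_conjugate_qadd_double[OF x units(2)] by (simp add: matrix_units_relations(2))
  then have p_eq: "(p1, p2, p3, p4) = o2_mul (o2_mul (ea, eb, ec, ed) (p1, p2, p3, p4)) (o2_add o2_one (ea, eb, ec, ed))"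
    using e p f units red2_conjugate_qmul[OF x] by (simp add: Ord_qmul)
  have "red2 (conjugate x (qmul (qmul E22 E21) E11)) = red2 (conjugate x E21)"
    using red2_conjugate_qadd_double[OF x units(3)] by (simp add: matrix_units_relations(3))
  then have q_eq: "(q1, q2, q3, q4) = o2_mul (o2_mul (o2_add o2_one (ea, eb, ec, ed)) (q1, q2, q3, q4)) (ea, eb, ec, ed)"
    using e q f units red2_conjugate_qmul[OF x] by (simp add: Ord_qmul)
  have nonzero: "(ea, eb, ec, ed) \<noteq> o2_zero" "o2_add o2_one (ea, eb, ec, ed) \<noteq> o2_zero"
      "(p1, p2, p3, p4) \<noteq> o2_zero" "(q1, q2, q3, q4) \<noteq> o2_zero"
    using e f p q red2_conjugate_eq_zero_iff[OF x units(1)] red2_conjugate_eq_zero_iff[OF x units(4)]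
      red2_conjugate_eq_zero_iff[OF x units(2)] red2_conjugate_eq_zero_iff[OF x units(3)]
    by (simp_all add: matrix_unit_defs o2_zero_def)
  show ?thesis
    using o2_corner_12[OF idem nonzero(1,2) p_eq nonzero(3)] o2_corner_21[OF idem nonzero(1,2) q_eq nonzero(4)]
      e f p q by (intro that) (auto simp: idem_image_def)
qed

lemma red2_conjugate:
  assumes x: "x \<in> Nplus" and z: "z \<in> Ord"
  shows "red2 (conjugate x z) = o2_aut (idem_image x) (red2 z)"
proof -
  obtain ea eb ec ed where e: "idem_image x = (ea, eb, ec, ed)" "ea \<noteq> ed"
    and images: "red2 (conjugate x E12) = (if ea then (False, True, False, False) else (False, False, True, False))"
      "red2 (conjugate x E21) = (if ea then (False, False, True, False) else (False, True, False, False))"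
      "red2 (conjugate x E22) = o2_add o2_one (ea, eb, ec, ed)"
    using red2_conjugate_matrix_units[OF x] by blast
  obtain a b c d where z_eq: "z = wint a b c d" using z by (rule Ord_cases)
  then have "red2 (conjugate x z) = o2_add (o2_if (odd (a + d)) (ea, eb, ec, ed))
      (o2_add (o2_if (odd (c - b)) (red2 (conjugate x E12)))
      (o2_add (o2_if (odd b) (red2 (conjugate x E21))) (o2_if (odd a) (red2 (conjugate x E22)))))"
    using e(1) Nplus_conjugate_Ord[OF x] matrix_units_in_Ord
    by (simp add: wint_eq_matrix_units conjugate_qadd conjugate_qscale red2_qadd red2_qscale Ord_qadd
        Ord_qscale o2_if_def idem_image_def del: of_int_add of_int_diff)
  also have "\<dots> = o2_aut (ea, eb, ec, ed) (odd (a + d), odd (c - b), odd b, odd a)"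
    unfolding images using o2_aut_eq_sum[OF e(2)] by simp
  also have "odd (c - b) = odd (b + c)" by presburger
  finally show ?thesis using e(1) z_eq by simp
qed

lemma idem_image_diagonal: "x \<in> Nplus \<Longrightarrow> \<exists>ea eb ec ed. idem_image x = (ea, eb, ec, ed) \<and> ea \<noteq> ed"
  by (metis red2_conjugate_matrix_units)

lemma idem_image_qmul:
  "x \<in> Nplus \<Longrightarrow> y \<in> Nplus \<Longrightarrow> idem_image (qmul x y) = o2_aut (idem_image x) (idem_image y)"
  using red2_conjugate[of x "conjugate y E11"] Nplus_conjugate_Ord[of y E11] matrix_units_in_Ord(1)
  by (simp add: idem_image_def conjugate_conjugate Nplus_nrd_nonzero)

lemma idem_image_qscale: "r \<noteq> 0 \<Longrightarrow> x \<in> Nplus \<Longrightarrow> idem_image (qscale r x) = idem_image x"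
  by (simp add: idem_image_def conjugate_qscale_left Nplus_nrd_nonzero)

text \<open>Elements of norm 2, 3 and 15 and two elements of \<open>O\<^sup>1\<close>; their images generate each of the
  three target groups.\<close>
definition pi2 :: quat where "pi2 = wint 2 1 0 0"
definition pi3 :: quat where "pi3 = wint 5 0 2 2"
definition pi15 :: quat where "pi15 = wint 1 0 0 (-2)"
definition ub :: quat where "ub = wint 3 2 1 0"
definition uc :: quat where "uc = wint 3 1 1 0"

lemmas wquat_eval_simps = wint_def qmul_wquat qconj_wquat qscale_wquat nrd_wquat nrd_form_def
  wquat_in_Ord_iff w1_wquat w2_wquat w3_wquat E11_def floor_minus

lemma pi2_in_Nplus: "pi2 \<in> Nplus"
  unfolding pi2_def by (intro NplusI) (simp_all add: conjugate_eq wquat_eval_simps)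

lemma pi3_in_Nplus: "pi3 \<in> Nplus"
  unfolding pi3_def by (intro NplusI) (simp_all add: conjugate_eq wquat_eval_simps)

lemma pi15_in_Nplus: "pi15 \<in> Nplus"
  unfolding pi15_def by (intro NplusI) (simp_all add: conjugate_eq wquat_eval_simps)

lemma ub_in_Ord1: "ub \<in> Ord1" and uc_in_Ord1: "uc \<in> Ord1"
  by (simp_all add: ub_def uc_def Ord1_def nrd_wint nrd_form_def)

lemma idem_image_pi2: "idem_image pi2 = (False, True, True, True)"
  and idem_image_pi3: "idem_image pi3 = (True, False, False, False)"
  and idem_image_pi15: "idem_image pi15 = (True, False, False, False)"
  and idem_image_ub: "idem_image ub = (True, True, False, False)"
  and idem_image_uc: "idem_image uc = (True, False, True, False)"
  by (simp_all add: idem_image_def pi2_def pi3_def pi15_def ub_def uc_def conjugate_eq wquat_eval_simps)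

subsection \<open>Parities of the valuations of the reduced norm\<close>

definition nrd_parity :: "int \<Rightarrow> quat \<Rightarrow> int" where
  "nrd_parity p x = val_parity p (nrd x)"

lemma nrd_parity_range: "nrd_parity p x \<in> {0, 1}"
  using val_parity_range[of p "nrd x"] by (simp add: nrd_parity_def)

lemma nrd_parity_qmul:
  "Factorial_Ring.prime p \<Longrightarrow> x \<in> Nplus \<Longrightarrow> y \<in> Nplus \<Longrightarrow>
    nrd_parity p (qmul x y) = (nrd_parity p x + nrd_parity p y) mod 2"
  by (simp add: nrd_parity_def nrd_qmul val_parity_mult Nplus_nrd_pos)

lemma nrd_parity_qscale:
  "Factorial_Ring.prime p \<Longrightarrow> r \<noteq> 0 \<Longrightarrow> x \<in> Nplus \<Longrightarrow> nrd_parity p (qscale r x) = nrd_parity p x"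
  by (simp add: nrd_parity_def nrd_qscale val_parity_mult_square Nplus_nrd_pos)

lemma nrd_parity_Ord1: "x \<in> Ord1 \<Longrightarrow> nrd_parity p x = 0"
  by (simp add: nrd_parity_def Ord1_def val_parity_def)

lemma nrd_parity_qinv:
  assumes "Factorial_Ring.prime p" "x \<in> Nplus" shows "nrd_parity p (qinv x) = nrd_parity p x"
proof -
  have "(nrd_parity p x + nrd_parity p (qinv x)) mod 2 = nrd_parity p qone"
    using nrd_parity_qmul[OF assms Nplus_qinv[OF assms(2)]] qmul_qinv Nplus_nrd_nonzero[OF assms(2)] by simp
  also have "\<dots> = 0" using qone_in_Ord1 by (rule nrd_parity_Ord1)
  finally show ?thesis using nrd_parity_range[of p x] nrd_parity_range[of p "qinv x"] by auto
qed

lemma nrd_parity_primitive: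
  assumes "Factorial_Ring.prime p" "\<not> p^2 dvd 30" "g > 0" "nrd_form n0 n1 n2 n3 > 0" "nrd_form n0 n1 n2 n3 dvd 30"
  shows "nrd_parity p (qscale g (wint n0 n1 n2 n3)) = (if p dvd nrd_form n0 n1 n2 n3 then 1 else 0)"
  using assms by (simp add: nrd_parity_def nrd_qscale nrd_wint val_parity_mult_square val_parity_of_int_divisor)

lemma nrd_parity_pi2: "nrd_parity 2 pi2 = 1" "nrd_parity 3 pi2 = 0" "nrd_parity 5 pi2 = 0"
  and nrd_parity_pi3: "nrd_parity 2 pi3 = 0" "nrd_parity 3 pi3 = 1" "nrd_parity 5 pi3 = 0"
  and nrd_parity_pi15: "nrd_parity 2 pi15 = 0" "nrd_parity 3 pi15 = 1" "nrd_parity 5 pi15 = 1"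
  using nrd_parity_primitive[of _ 1 2 1 0 0] nrd_parity_primitive[of _ 1 5 0 2 2]
    nrd_parity_primitive[of _ 1 1 0 0 "-2"]
  by (simp_all add: pi2_def pi3_def pi15_def nrd_form_def)

text \<open>The primitive part has norm dividing 30 and prime to 30.\<close>
lemma Nplus_even_parities_cases:
  assumes x: "x \<in> Nplus" and "nrd_parity 2 x = 0" "nrd_parity 3 x = 0" "nrd_parity 5 x = 0"
  obtains r y where "r \<noteq> 0" "y \<in> Ord1" "x = qscale r y"
proof -
  obtain g n0 n1 n2 n3 where g: "g > 0" "x = qscale g (wint n0 n1 n2 n3)"
    and N: "nrd_form n0 n1 n2 n3 > 0" "nrd_form n0 n1 n2 n3 dvd 30"
    using x by (rule Nplus_primitive_decomposition)
  have "\<not> p dvd nrd_form n0 n1 n2 n3" if "p \<in> {2, 3, 5}" for p :: int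
    using that assms nrd_parity_primitive[OF _ _ g(1) N, of p] g(2) by auto
  then have "nrd_form n0 n1 n2 n3 = 1" using N divisor_of_30_eq_1 by blast
  then have "wint n0 n1 n2 n3 \<in> Ord1" by (simp add: Ord1_def nrd_wint)
  with g show ?thesis by (intro that[of g]) simp_all
qed

lemma idem_image_odd_nrd:
  assumes y: "y \<in> Nplus" "y = wint n0 n1 n2 n3" and odd: "odd (nrd_form n0 n1 n2 n3)"
  shows "idem_image y = (True, odd (n1 + n2), odd n1, False)"
proof -
  define N where "N = nrd_form n0 n1 n2 n3"
  have "nrd y = of_int N" using y by (simp add: N_def nrd_wint)
  moreover have "N \<noteq> 0" using odd by (auto simp: N_def)
  ultimately have "qmul (qmul y E11) (qconj y) = qscale (of_int N) (conjugate y E11)"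
    by (simp add: conjugate_eq)
  then have "red2 (qmul (qmul y E11) (qconj y)) = idem_image y"
    using red2_qscale[OF Nplus_conjugate_Ord[OF y(1) matrix_units_in_Ord(1)], of N] odd
    by (simp add: idem_image_def N_def)
  moreover have "red2 (qmul (qmul y E11) (qconj y)) = (True, odd (n1 + n2), odd n1, False)"
    using odd_nrd_form[OF odd] y(2)
    by (simp add: red2_qmul Ord_qmul Ord_qconj E11_def red2_qconj o2_mul_def)
  ultimately show ?thesis by simp
qed

lemma idem_image_fst_iff:
  assumes x: "x \<in> Nplus" shows "fst (idem_image x) \<longleftrightarrow> nrd_parity 2 x = 0"
proof -
  have even_case: "fst (idem_image z)" if z: "z \<in> Nplus" "nrd_parity 2 z = 0" for z
  proof -
    obtain g n0 n1 n2 n3 where g: "g > 0" "z = qscale g (wint n0 n1 n2 n3)"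
      and N: "nrd_form n0 n1 n2 n3 > 0" "nrd_form n0 n1 n2 n3 dvd 30"
      using z(1) by (rule Nplus_primitive_decomposition)
    have "odd (nrd_form n0 n1 n2 n3)" using nrd_parity_primitive[of 2, OF _ _ g(1) N] z(2) g(2) by auto
    moreover have y: "wint n0 n1 n2 n3 \<in> Nplus" using Nplus_qscale[OF z(1), of "1/g"] g by simp
    ultimately show ?thesis
      using idem_image_odd_nrd[OF y refl] idem_image_qscale[of g, OF _ y] g by simp
  qed
  show ?thesis
  proof (cases "nrd_parity 2 x = 0")
    case False
    then have x2: "nrd_parity 2 x = 1" using nrd_parity_range[of 2 x] by auto
    define z where "z = qmul x (qinv pi2)"
    have z: "z \<in> Nplus" using x pi2_in_Nplus by (simp add: z_def Nplus_qmul Nplus_qinv)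
    have "nrd_parity 2 z = 0"
      using x2 nrd_parity_qmul[of 2, OF _ x Nplus_qinv[OF pi2_in_Nplus]]
        nrd_parity_qinv[of 2, OF _ pi2_in_Nplus] nrd_parity_pi2 by (simp add: z_def)
    then have "fst (idem_image z)" using even_case[OF z] by simp
    moreover have "x = qmul z pi2"
      using Nplus_nrd_nonzero[OF pi2_in_Nplus] by (simp add: z_def qmul_assoc qmul_qinv)
    ultimately show ?thesis
      using False idem_image_qmul[OF z pi2_in_Nplus] idem_image_pi2
      by (cases "idem_image z") (simp add: o2_aut_def)
  qed (use even_case[OF x] in simp)
qed

lemma idem_image_Ord1:
  assumes "y \<in> Ord1" "red2 y = (True, b, c, True)" shows "idem_image y = (True, b, c, False)"
proof -
  obtain n0 n1 n2 n3 where y: "y = wint n0 n1 n2 n3" "nrd_form n0 n1 n2 n3 = 1"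
    using assms(1) by (rule Ord1_cases)
  then show ?thesis
    using idem_image_odd_nrd[OF subsetD[OF Ord1_subset_Nplus assms(1)] y(1)] assms(2) by simp
qed

lemma C2_simps [simp]: "carrier C2 = {0..<2}" "x \<otimes>\<^bsub>C2\<^esub> y = (x + y) mod 2" "\<one>\<^bsub>C2\<^esub> = 0"
  by (simp_all add: C2_def carrier_integer_mod_group)

lemma group_C2: "group C2"
  by (simp add: C2_def)

lemma D8_simps [simp]: "carrier D8 = {0..<4} \<times> {0..<2}" "\<one>\<^bsub>D8\<^esub> = (0, 0)"
  "(a, s) \<otimes>\<^bsub>D8\<^esub> (b, t) = ((a + (if s = 0 then b else - b)) mod 4, (s + t) mod 2)"
  by (simp_all add: D8_def)

lemma group_D8: "group D8"
proof (rule groupI)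
  fix x y z assume "x \<in> carrier D8" "y \<in> carrier D8" "z \<in> carrier D8"
  then obtain a s b t c u where "x = (a, s)" "y = (b, t)" "z = (c, u)"
    and "s = 0 \<or> s = 1" "t = 0 \<or> t = 1" "u = 0 \<or> u = 1" by force
  then show "x \<otimes>\<^bsub>D8\<^esub> y \<otimes>\<^bsub>D8\<^esub> z = x \<otimes>\<^bsub>D8\<^esub> (y \<otimes>\<^bsub>D8\<^esub> z)"
    by (auto simp: mod_simps algebra_simps)
next
  fix x assume "x \<in> carrier D8"
  then obtain a s where x: "x = (a, s)" "a \<in> {0..<4}" "s = 0 \<or> s = 1" by force
  then have "(if s = 0 then (- a) mod 4 else a, s) \<otimes>\<^bsub>D8\<^esub> x = \<one>\<^bsub>D8\<^esub>"
    by (auto simp: mod_simps)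
  moreover have "(if s = 0 then (- a) mod 4 else a, s) \<in> carrier D8" using x by auto
  ultimately show "\<exists>y\<in>carrier D8. y \<otimes>\<^bsub>D8\<^esub> x = \<one>\<^bsub>D8\<^esub>" by blast
qed (auto split: prod.split)

lemma nrd_parity_bounds: "0 \<le> nrd_parity p x" "nrd_parity p x < 2"
  using nrd_parity_range[of p x] by auto

text \<open>A numbering \<open>r\<^sup>a s\<^sup>t\<close> of the eight idempotents \<open>(ea, eb, ec, ed)\<close> with \<open>ea \<noteq> ed\<close>
  under which \<open>o2_aut\<close> becomes the group law of \<open>D8\<close>.\<close>
definition d8_of_idem :: "o2 \<Rightarrow> int \<times> int" where
  "d8_of_idem e = (case e of (ea, eb, ec, ed) \<Rightarrow>
     if \<not> ed \<and> \<not> eb \<and> \<not> ec then (0, 0) else if ed \<and> eb \<and> \<not> ec then (1, 0)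
     else if \<not> ed \<and> eb \<and> ec then (2, 0) else if ed \<and> \<not> eb \<and> ec then (3, 0)
     else if \<not> ed \<and> eb \<and> \<not> ec then (0, 1) else if ed \<and> eb \<and> ec then (1, 1)
     else if \<not> ed \<and> \<not> eb \<and> ec then (2, 1) else (3, 1))"

lemma d8_of_idem_in_carrier: "d8_of_idem e \<in> {0..<4} \<times> {0..<2}"
  by (cases e) (auto simp: d8_of_idem_def)

lemma d8_of_idem_o2_aut: "ea \<noteq> ed \<Longrightarrow> fa \<noteq> fd \<Longrightarrow>
  d8_of_idem (o2_aut (ea, eb, ec, ed) (fa, fb, fc, fd)) = d8_of_idem (ea, eb, ec, ed) \<otimes>\<^bsub>D8\<^esub> d8_of_idem (fa, fb, fc, fd)"
  by (cases ea; cases eb; cases ec; cases fa; cases fb; cases fc; simp add: d8_of_idem_def o2_aut_def)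

lemma d8_of_idem_eq_one_iff: "ea \<noteq> ed \<Longrightarrow> d8_of_idem (ea, eb, ec, ed) = (0, 0) \<longleftrightarrow> (ea, eb, ec, ed) = (True, False, False, False)"
  by (cases ea; cases eb; cases ec; simp add: d8_of_idem_def)

definition to_D8_C2_C2 :: "quat \<Rightarrow> (int \<times> int) \<times> int \<times> int" where
  "to_D8_C2_C2 x = (d8_of_idem (idem_image x), nrd_parity 3 x, nrd_parity 5 x)"

lemma to_D8_C2_C2_qmul:
  assumes "x \<in> Nplus" "y \<in> Nplus"
  shows "to_D8_C2_C2 (qmul x y) = to_D8_C2_C2 x \<otimes>\<^bsub>D8 \<times>\<times> C2 \<times>\<times> C2\<^esub> to_D8_C2_C2 y"
proof -
  obtain ea eb ec ed where "idem_image x = (ea, eb, ec, ed)" "ea \<noteq> ed" using idem_image_diagonal[OF assms(1)] by blast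
  moreover obtain fa fb fc fd where "idem_image y = (fa, fb, fc, fd)" "fa \<noteq> fd" using idem_image_diagonal[OF assms(2)] by blast
  ultimately have "d8_of_idem (idem_image (qmul x y)) = d8_of_idem (idem_image x) \<otimes>\<^bsub>D8\<^esub> d8_of_idem (idem_image y)"
    using idem_image_qmul[OF assms] d8_of_idem_o2_aut by simp
  then show ?thesis using nrd_parity_qmul[of 3, OF _ assms] nrd_parity_qmul[of 5, OF _ assms]
    by (simp add: to_D8_C2_C2_def)
qed

lemma to_D8_C2_C2_hom: "to_D8_C2_C2 \<in> hom Nplus_group (D8 \<times>\<times> C2 \<times>\<times> C2)"
  by (intro homI) (simp_all add: to_D8_C2_C2_def d8_of_idem_in_carrier nrd_parity_bounds
      to_D8_C2_C2_qmul[unfolded to_D8_C2_C2_def])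

lemma to_D8_C2_C2_qscale: "r \<noteq> 0 \<Longrightarrow> x \<in> Nplus \<Longrightarrow> to_D8_C2_C2 (qscale r x) = to_D8_C2_C2 x"
  by (simp add: to_D8_C2_C2_def idem_image_qscale nrd_parity_qscale)

lemma to_D8_C2_C2_Ord1_2: "s \<in> Ord1_2 \<Longrightarrow> to_D8_C2_C2 s = \<one>\<^bsub>D8 \<times>\<times> C2 \<times>\<times> C2\<^esub>"
  using idem_image_Ord1[of s False False] Ord1_2_iff_red2[of s] nrd_parity_Ord1
  by (auto simp: Ord1_2_def to_D8_C2_C2_def d8_of_idem_def o2_one_def)

lemma to_D8_C2_C2_Qstar: "z \<in> Qstar \<Longrightarrow> to_D8_C2_C2 z = \<one>\<^bsub>D8 \<times>\<times> C2 \<times>\<times> C2\<^esub>"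
  using to_D8_C2_C2_qscale[OF _ qone_in_Nplus] to_D8_C2_C2_Ord1_2[of qone] qone_in_Ord1
  by (auto simp: Qstar_def qscale_qone[symmetric] Ord1_2_iff_red2 red2_qone)

lemma to_D8_C2_C2_eq_one_iff:
  assumes x: "x \<in> Nplus"
  shows "to_D8_C2_C2 x = \<one>\<^bsub>D8 \<times>\<times> C2 \<times>\<times> C2\<^esub> \<longleftrightarrow> (\<exists>s\<in>Ord1_2. x \<in> Qstar #>\<^bsub>Nplus_group\<^esub> s)"
proof
  assume one: "to_D8_C2_C2 x = \<one>\<^bsub>D8 \<times>\<times> C2 \<times>\<times> C2\<^esub>"
  have E11: "idem_image x = (True, False, False, False)"
    using one idem_image_diagonal[OF x] d8_of_idem_eq_one_iff by (auto simp: to_D8_C2_C2_def)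
  then have "nrd_parity 2 x = 0" using idem_image_fst_iff[OF x] by simp
  then obtain r y where y: "r \<noteq> 0" "y \<in> Ord1" "x = qscale r y"
    using Nplus_even_parities_cases[OF x] one by (auto simp: to_D8_C2_C2_def)
  obtain b c where "red2 y = (True, b, c, True)" using y(2) by (rule red2_Ord1)
  moreover have "idem_image y = (True, False, False, False)"
    using E11 y idem_image_qscale subsetD[OF Ord1_subset_Nplus] by auto
  ultimately have "y \<in> Ord1_2"
    using idem_image_Ord1[OF y(2)] Ord1_2_iff_red2[OF y(2)] by (simp add: o2_one_def)
  with y show "\<exists>s\<in>Ord1_2. x \<in> Qstar #>\<^bsub>Nplus_group\<^esub> s" by (auto simp: Qstar_coset_iff)
next
  assume "\<exists>s\<in>Ord1_2. x \<in> Qstar #>\<^bsub>Nplus_group\<^esub> s"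
  then obtain s r where "s \<in> Ord1_2" "r \<noteq> 0" "x = qscale r s" by (auto simp: Qstar_coset_iff)
  then show "to_D8_C2_C2 x = \<one>\<^bsub>D8 \<times>\<times> C2 \<times>\<times> C2\<^esub>"
    using to_D8_C2_C2_qscale to_D8_C2_C2_Ord1_2 Ord1_subset_Nplus by (auto simp: Ord1_2_def)
qed

lemma to_D8_C2_C2_surj: "to_D8_C2_C2 ` Nplus = carrier (D8 \<times>\<times> C2 \<times>\<times> C2)"
proof
  show "to_D8_C2_C2 ` Nplus \<subseteq> carrier (D8 \<times>\<times> C2 \<times>\<times> C2)"
    using hom_carrier[OF to_D8_C2_C2_hom] by simp
  let ?img = "to_D8_C2_C2 ` Nplus"
  have mult: "a \<otimes>\<^bsub>D8 \<times>\<times> C2 \<times>\<times> C2\<^esub> b \<in> ?img" if "a \<in> ?img" "b \<in> ?img" for a b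
    using hom_image_mult_closed[OF group.is_monoid[OF group_Nplus_group] to_D8_C2_C2_hom] that by simp
  have "to_D8_C2_C2 qone = ((0, 0), 0, 0)" "to_D8_C2_C2 ub = ((0, 1), 0, 0)" "to_D8_C2_C2 uc = ((2, 1), 0, 0)"
    "to_D8_C2_C2 pi2 = ((1, 1), 0, 0)" "to_D8_C2_C2 pi3 = ((0, 0), 1, 0)" "to_D8_C2_C2 pi15 = ((0, 0), 1, 1)"
    using qone_in_Ord1 ub_in_Ord1 uc_in_Ord1 idem_image_Ord1[OF qone_in_Ord1, of False False]
    by (simp_all add: to_D8_C2_C2_def d8_of_idem_def nrd_parity_Ord1 red2_qone o2_one_def
        idem_image_ub idem_image_uc idem_image_pi2 idem_image_pi3 idem_image_pi15
        nrd_parity_pi2 nrd_parity_pi3 nrd_parity_pi15)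
  then have gens: "((0, 0), 0, 0) \<in> ?img" "((0, 1), 0, 0) \<in> ?img" "((2, 1), 0, 0) \<in> ?img"
    "((1, 1), 0, 0) \<in> ?img" "((0, 0), 1, 0) \<in> ?img" "((0, 0), 1, 1) \<in> ?img"
    using qone_in_Nplus ub_in_Ord1 uc_in_Ord1 Ord1_subset_Nplus pi2_in_Nplus pi3_in_Nplus pi15_in_Nplus
    by (metis image_eqI subsetD)+
  have r3: "((3, 0), 0, 0) \<in> ?img" using mult[OF gens(2,4)] by simp
  have rotations: "((k, s), 0, 0) \<in> ?img" if "k \<in> {0..<4}" "s \<in> {0..<2}" for k s
  proof -
    have "((2, 0), 0, 0) \<in> ?img" "((1, 0), 0, 0) \<in> ?img" "((3, 1), 0, 0) \<in> ?img"
      using mult[OF gens(2,3)] mult[OF gens(4,2)] mult[OF r3 gens(2)] by simp_all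
    moreover have "k = 0 \<or> k = 1 \<or> k = 2 \<or> k = 3" "s = 0 \<or> s = 1" using that by auto
    ultimately show ?thesis using gens r3 by auto
  qed
  have reflections: "((0, 0), u, v) \<in> ?img" if "u \<in> {0..<2}" "v \<in> {0..<2}" for u v
  proof -
    have "((0, 0), 0, 1) \<in> ?img" using mult[OF gens(5,6)] by simp
    moreover have "u = 0 \<or> u = 1" "v = 0 \<or> v = 1" using that by auto
    ultimately show ?thesis using gens by auto
  qed
  show "carrier (D8 \<times>\<times> C2 \<times>\<times> C2) \<subseteq> ?img"
  proof
    fix t assume "t \<in> carrier (D8 \<times>\<times> C2 \<times>\<times> C2)"
    then obtain k s u v where t: "t = ((k, s), u, v)" and
      ksuv: "k \<in> {0..<4}" "s \<in> {0..<2}" "u \<in> {0..<2}" "v \<in> {0..<2}"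
      by auto
    with mult[OF rotations[OF ksuv(1,2)] reflections[OF ksuv(3,4)]] show "t \<in> ?img" by (simp split: if_splits)
  qed
qed

theorem GammaPlus_Mod_Gamma1_2_iso: "GammaPlus Mod Gamma1_2_in_plus \<cong> D8 \<times>\<times> C2 \<times>\<times> C2"
  unfolding GammaPlus_def Gamma1_2_in_plus_def
proof (rule FactGroup_FactGroup_iso[OF group_Nplus_group Qstar_normal _ to_D8_C2_C2_hom _
      to_D8_C2_C2_Qstar])
  show "group (D8 \<times>\<times> C2 \<times>\<times> C2)" by (intro DirProd_group group_D8 group_C2)
  show "Ord1_2 \<subseteq> carrier Nplus_group" using Ord1_subset_Nplus by (auto simp: Ord1_2_def)
qed (use to_D8_C2_C2_surj to_D8_C2_C2_eq_one_iff in simp_all)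

definition to_C2_C2_C2 :: "quat \<Rightarrow> int \<times> int \<times> int" where
  "to_C2_C2_C2 x = (nrd_parity 2 x, nrd_parity 3 x, nrd_parity 5 x)"

lemma to_C2_C2_C2_hom: "to_C2_C2_C2 \<in> hom Nplus_group (C2 \<times>\<times> C2 \<times>\<times> C2)"
  by (intro homI) (simp_all add: to_C2_C2_C2_def nrd_parity_bounds nrd_parity_qmul)

lemma to_C2_C2_C2_qscale: "r \<noteq> 0 \<Longrightarrow> x \<in> Nplus \<Longrightarrow> to_C2_C2_C2 (qscale r x) = to_C2_C2_C2 x"
  by (simp add: to_C2_C2_C2_def nrd_parity_qscale)

lemma to_C2_C2_C2_Ord1: "s \<in> Ord1 \<Longrightarrow> to_C2_C2_C2 s = \<one>\<^bsub>C2 \<times>\<times> C2 \<times>\<times> C2\<^esub>"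
  by (simp add: to_C2_C2_C2_def nrd_parity_Ord1)

lemma to_C2_C2_C2_Qstar: "z \<in> Qstar \<Longrightarrow> to_C2_C2_C2 z = \<one>\<^bsub>C2 \<times>\<times> C2 \<times>\<times> C2\<^esub>"
  using to_C2_C2_C2_qscale[OF _ qone_in_Nplus] to_C2_C2_C2_Ord1[OF qone_in_Ord1]
  by (auto simp: Qstar_def qscale_qone[symmetric])

lemma to_C2_C2_C2_eq_one_iff:
  assumes x: "x \<in> Nplus"
  shows "to_C2_C2_C2 x = \<one>\<^bsub>C2 \<times>\<times> C2 \<times>\<times> C2\<^esub> \<longleftrightarrow> (\<exists>s\<in>Ord1. x \<in> Qstar #>\<^bsub>Nplus_group\<^esub> s)"
proof
  assume "to_C2_C2_C2 x = \<one>\<^bsub>C2 \<times>\<times> C2 \<times>\<times> C2\<^esub>"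
  then obtain r y where "r \<noteq> 0" "y \<in> Ord1" "x = qscale r y"
    using Nplus_even_parities_cases[OF x] by (auto simp: to_C2_C2_C2_def)
  then show "\<exists>s\<in>Ord1. x \<in> Qstar #>\<^bsub>Nplus_group\<^esub> s" by (auto simp: Qstar_coset_iff)
next
  assume "\<exists>s\<in>Ord1. x \<in> Qstar #>\<^bsub>Nplus_group\<^esub> s"
  then obtain s r where "s \<in> Ord1" "r \<noteq> 0" "x = qscale r s" by (auto simp: Qstar_coset_iff)
  then show "to_C2_C2_C2 x = \<one>\<^bsub>C2 \<times>\<times> C2 \<times>\<times> C2\<^esub>"
    using to_C2_C2_C2_qscale to_C2_C2_C2_Ord1 Ord1_subset_Nplus by auto
qed

lemma to_C2_C2_C2_surj: "to_C2_C2_C2 ` Nplus = carrier (C2 \<times>\<times> C2 \<times>\<times> C2)"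
proof
  show "to_C2_C2_C2 ` Nplus \<subseteq> carrier (C2 \<times>\<times> C2 \<times>\<times> C2)"
    using hom_carrier[OF to_C2_C2_C2_hom] by simp
  let ?img = "to_C2_C2_C2 ` Nplus"
  have mult: "a \<otimes>\<^bsub>C2 \<times>\<times> C2 \<times>\<times> C2\<^esub> b \<in> ?img" if "a \<in> ?img" "b \<in> ?img" for a b
    using hom_image_mult_closed[OF group.is_monoid[OF group_Nplus_group] to_C2_C2_C2_hom] that by simp
  have "to_C2_C2_C2 qone = (0, 0, 0)" "to_C2_C2_C2 pi2 = (1, 0, 0)" "to_C2_C2_C2 pi3 = (0, 1, 0)"
    "to_C2_C2_C2 pi15 = (0, 1, 1)"
    using to_C2_C2_C2_Ord1[OF qone_in_Ord1]
    by (simp_all add: to_C2_C2_C2_def nrd_parity_pi2 nrd_parity_pi3 nrd_parity_pi15)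
  then have gens: "(0, 0, 0) \<in> ?img" "(1, 0, 0) \<in> ?img" "(0, 1, 0) \<in> ?img" "(0, 1, 1) \<in> ?img"
    using qone_in_Nplus pi2_in_Nplus pi3_in_Nplus pi15_in_Nplus by (metis image_eqI)+
  have "(0, 0, 1) \<in> ?img" using mult[OF gens(3,4)] by simp
  then have odd_part: "(0, b, c) \<in> ?img" if "b \<in> {0..<2}" "c \<in> {0..<2}" for b c
  proof -
    have "b = 0 \<or> b = 1" "c = 0 \<or> c = 1" using that by auto
    then show ?thesis using gens \<open>(0, 0, 1) \<in> ?img\<close> by auto
  qed
  show "carrier (C2 \<times>\<times> C2 \<times>\<times> C2) \<subseteq> ?img"
  proof
    fix t assume "t \<in> carrier (C2 \<times>\<times> C2 \<times>\<times> C2)"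
    then obtain a b c where t: "t = (a, b, c)" "a \<in> {0..<2}" "b \<in> {0..<2}" "c \<in> {0..<2}" by auto
    then have "a = 0 \<or> a = 1" by auto
    then show "t \<in> ?img"
      using mult[OF gens(2) odd_part[OF t(3,4)]] odd_part[OF t(3,4)] t by (auto simp: mod_pos_pos_trivial)
  qed
qed

theorem GammaPlus_Mod_Gamma1_iso: "GammaPlus Mod Gamma1_in_plus \<cong> C2 \<times>\<times> C2 \<times>\<times> C2"
  unfolding GammaPlus_def Gamma1_in_plus_def
proof (rule FactGroup_FactGroup_iso[OF group_Nplus_group Qstar_normal _ to_C2_C2_C2_hom _
      to_C2_C2_C2_Qstar])
  show "group (C2 \<times>\<times> C2 \<times>\<times> C2)" by (intro DirProd_group group_C2)
  show "Ord1 \<subseteq> carrier Nplus_group" using Ord1_subset_Nplus by simp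
qed (use to_C2_C2_C2_surj to_C2_C2_C2_eq_one_iff in simp_all)

definition to_C2_C2 :: "quat \<Rightarrow> int \<times> int" where
  "to_C2_C2 x = (case red2 x of (a, b, c, d) \<Rightarrow> (of_bool b, of_bool c))"

lemma to_C2_C2_qmul:
  assumes "x \<in> Ord1" "y \<in> Ord1" shows "to_C2_C2 (qmul x y) = to_C2_C2 x \<otimes>\<^bsub>C2 \<times>\<times> C2\<^esub> to_C2_C2 y"
proof -
  obtain b c where "red2 x = (True, b, c, True)" using assms(1) by (rule red2_Ord1)
  moreover obtain b' c' where "red2 y = (True, b', c', True)" using assms(2) by (rule red2_Ord1)
  ultimately show ?thesis
    using assms red2_qmul[of x y] by (auto simp: Ord1_def to_C2_C2_def o2_mul_def)
qed

lemma to_C2_C2_hom: "to_C2_C2 \<in> hom Ord1_group (C2 \<times>\<times> C2)"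
  by (intro homI) (auto simp: to_C2_C2_def to_C2_C2_qmul[unfolded to_C2_C2_def] split: prod.split)

lemma to_C2_C2_eq_one_iff: assumes "x \<in> Ord1" shows "to_C2_C2 x = \<one>\<^bsub>C2 \<times>\<times> C2\<^esub> \<longleftrightarrow> x \<in> Ord1_2"
proof -
  obtain b c where "red2 x = (True, b, c, True)" using assms by (rule red2_Ord1)
  then show ?thesis using Ord1_2_iff_red2[OF assms] by (simp add: to_C2_C2_def o2_one_def)
qed

lemma to_C2_C2_minus: "x \<in> Ord \<Longrightarrow> to_C2_C2 (qscale (-1) x) = to_C2_C2 x"
  using red2_qscale[of x "-1"] by (simp add: to_C2_C2_def)

lemma to_C2_C2_surj: "to_C2_C2 ` Ord1 = carrier (C2 \<times>\<times> C2)"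
proof
  show "to_C2_C2 ` Ord1 \<subseteq> carrier (C2 \<times>\<times> C2)"
    using hom_carrier[OF to_C2_C2_hom] by simp
  let ?img = "to_C2_C2 ` Ord1"
  have "to_C2_C2 qone = (0, 0)" "to_C2_C2 ub = (1, 0)" "to_C2_C2 uc = (0, 1)"
    by (simp_all add: to_C2_C2_def qone_wint ub_def uc_def)
  then have gens: "(0, 0) \<in> ?img" "(1, 0) \<in> ?img" "(0, 1) \<in> ?img"
    using qone_in_Ord1 ub_in_Ord1 uc_in_Ord1 by (metis image_eqI)+
  have both: "(1, 1) \<in> ?img"
    using hom_image_mult_closed[OF group.is_monoid[OF group_Ord1_group] to_C2_C2_hom, of "(1, 0)" "(0, 1)"]
      gens(2,3) by simp
  show "carrier (C2 \<times>\<times> C2) \<subseteq> ?img"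
  proof
    fix t assume "t \<in> carrier (C2 \<times>\<times> C2)"
    then obtain a b where "t = (a, b)" "a = 0 \<or> a = 1" "b = 0 \<or> b = 1" by force
    then show "t \<in> ?img" using gens both by auto
  qed
qed

theorem Gamma1_Mod_Gamma1_2_iso: "Gamma1 Mod Gamma1_2 \<cong> C2 \<times>\<times> C2"
  unfolding Gamma1_def Gamma1_2_def
proof (rule FactGroup_FactGroup_iso[OF group_Ord1_group plus_minus_one_normal _ to_C2_C2_hom])
  show "group (C2 \<times>\<times> C2)" by (intro DirProd_group group_C2)
  show "Ord1_2 \<subseteq> carrier Ord1_group" by (auto simp: Ord1_2_def)
  show "to_C2_C2 z = \<one>\<^bsub>C2 \<times>\<times> C2\<^esub>" if "z \<in> {qone, qof (-1)}" for z
    using that qof_wint[of "-1"] by (auto simp: to_C2_C2_def qone_wint)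
  show "to_C2_C2 x = \<one>\<^bsub>C2 \<times>\<times> C2\<^esub> \<longleftrightarrow> (\<exists>s\<in>Ord1_2. x \<in> {qone, qof (-1)} #>\<^bsub>Ord1_group\<^esub> s)"
    if "x \<in> carrier Ord1_group" for x
  proof
    assume "to_C2_C2 x = \<one>\<^bsub>C2 \<times>\<times> C2\<^esub>"
    then have "x \<in> Ord1_2" using that to_C2_C2_eq_one_iff by simp
    then show "\<exists>s\<in>Ord1_2. x \<in> {qone, qof (-1)} #>\<^bsub>Ord1_group\<^esub> s" by (auto simp: plus_minus_one_coset_iff)
  next
    assume "\<exists>s\<in>Ord1_2. x \<in> {qone, qof (-1)} #>\<^bsub>Ord1_group\<^esub> s"
    then obtain s where s: "s \<in> Ord1_2" "x = s \<or> x = qscale (-1) s" by (auto simp: plus_minus_one_coset_iff)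
    then have "s \<in> Ord1" "s \<in> Ord" by (auto simp: Ord1_2_def Ord1_def)
    then show "to_C2_C2 x = \<one>\<^bsub>C2 \<times>\<times> C2\<^esub>" using s to_C2_C2_eq_one_iff to_C2_C2_minus by auto
  qed
qed (use to_C2_C2_surj in simp)

theorem lemma5p10:
  shows "GammaPlus Mod Gamma1_2_in_plus \<cong> D8 \<times>\<times> C2 \<times>\<times> C2 \<and>
         GammaPlus Mod Gamma1_in_plus \<cong> C2 \<times>\<times> C2 \<times>\<times> C2 \<and>
         Gamma1 Mod Gamma1_2 \<cong> C2 \<times>\<times> C2"
  using GammaPlus_Mod_Gamma1_2_iso GammaPlus_Mod_Gamma1_iso Gamma1_Mod_Gamma1_2_iso by blast

end
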